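(* Let $\epsilon \in (0,1)$ and $s, k, T \in \mathbb{N}$. Let $\mathcal{W}$ be any distribution on $\{0,1\}^T$ satisfying the $\epsilon$-martingale condition, and let $\mathcal{B}_\epsilon$ be the distribution on $\{0,1\}^T$ of independent bits each equal to $1$ with probability $(1-\epsilon)/2$. Then \[ \mathbf{S}^{s,k}[\mathcal{W}] \le \mathbf{S}^{s,k}[\mathcal{B}_\epsilon] \le \exp\bigl(-\Omega(\epsilon^3(1-O(\epsilon))k)\bigr), \] where the asymptotic notation hides constants that do not depend on $\epsilon$ or $k$.
   Context: Characteristic strings and forks. A characteristic string is $w=w_1\dots w_n\in\{0,1\}^n$; index $i$ is honest if $w_i=0$ and adversarial if $w_i=1$. A fork for $w$ is a rooted tree $F=(V,E)$ with edges directed away from the root $r$, together with a labeling $\ell:V\to\{0,1,\dots,n\}$, such that (F1) $\ell(r)=0$; (F2) labels strictly increase along every directed path; (F3) every honest index $i$ is the label of exactly one vertex; (F4) if $i<j$ are honest indices then the vertex labeled $i$ has strictly smaller depth than the vertex labeled $j$. Write $F\vdash w$. A tine is a directed path starting at the root (not necessarily ending at a leaf); its length is its number of edges. For strings $x$ a prefix of $w$ and forks $F\vdash x$, $F'\vdash w$, write $F\sqsubseteq F'$ if $F$ is a subgraph of $F'$ with identical labels. Settlement. For $w\in\{0,1\}^n$ and a fork $F\vdash w_1\dots w_t$ with $s+k\le t\le n$, slot $s$ is not $k$-settled in $F$ if $F$ contains two tines of maximum length which either contain different vertices labeled $s$, or one contains a vertex labeled $s$ and the other does not; otherwise slot $s$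 is $k$-settled in $F$. Settlement game. For a distribution $\mathcal{D}$ on $\{0,1\}^T$, the $(\mathcal{D},T;s,k)$-settlement game between an adversary $\mathcal{A}$ and a deterministic challenger: (1) $w\in\{0,1\}^T$ is drawn from $\mathcal{D}$ and given to $\mathcal{A}$; (2) $A_0$ is the fork for the empty string consisting of a single root vertex; (3) for $t=1,\dots,T$ in order: (a) if $w_t=0$, the challenger forms $F_t\vdash w_1\dots w_t$ by adding one vertex labeled $t$ to the end of a longest path of $A_{t-1}$ (ties broken by $\mathcal{A}$); (b) if $w_t=1$, $\mathcal{A}$ chooses an arbitrary fork $F_t\vdash w_1\dots w_t$ with $A_{t-1}\sqsubseteq F_t$; (c) $\mathcal{A}$ chooses an arbitrary fork $A_t\vdash w_1\dots w_t$ with $F_t\sqsubseteq A_t$. $\mathcal{A}$ wins if slot $s$ is not $k$-settled in some $A_t$ with $t\ge s+k$. The $(s,k)$-settlement insecurity is $\mathbf{S}^{s,k}[\mathcal{D}]=\max_{\mathcal{A}}\Pr[\mathcal{A}\text{ wins}]$. A random variable $W=(W_1,\dots,W_n)\in\{0,1\}^n$ (or its distribution) satisfies the $\epsilon$-martingale condition if for every $t$, $\Pr[W_t=1\mid W_1,\dots,W_{t-1}]\le(1-\epsilon)/2$ (for arbitrary conditioning values). *)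

theory Defs
  imports "HOL-Probability.Probability_Mass_Function"
begin

text \<open>Characteristic strings are bool lists; index i (1-based) is w ! (i - 1);
  True = adversarial (bit 1), False = honest (bit 0).\<close>

definition honest :: "bool list \<Rightarrow> nat \<Rightarrow> bool" where
  "honest w i \<longleftrightarrow> 1 \<le> i \<and> i \<le> length w \<and> \<not> w ! (i - 1)"

record fork =
  verts :: "nat set"
  edges :: "(nat \<times> nat) set"
  root :: nat
  lab :: "nat \<Rightarrow> nat"

definition depth :: "fork \<Rightarrow> nat \<Rightarrow> nat" where
  "depth F v = (LEAST m. (root F, v) \<in> edges F ^^ m)"

definition is_fork :: "bool list \<Rightarrow> fork \<Rightarrow> bool" where
  "is_fork w F \<longleftrightarrow>
     finite (verts F) \<and> root F \<in> verts F \<and> edges F \<subseteq> verts F \<times> verts F \<and>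
     \<comment> \<open>rooted tree with edges directed away from the root\<close>
     (\<forall>u. (u, root F) \<notin> edges F) \<and>
     (\<forall>v\<in>verts F. v \<noteq> root F \<longrightarrow> (\<exists>!u. (u, v) \<in> edges F)) \<and>
     (\<forall>v\<in>verts F. (root F, v) \<in> (edges F)\<^sup>*) \<and>
     \<comment> \<open>labels in {0..n}\<close>
     (\<forall>v\<in>verts F. lab F v \<le> length w) \<and>
     \<comment> \<open>(F1)\<close>
     lab F (root F) = 0 \<and>
     \<comment> \<open>(F2) labels strictly increase along every directed path\<close>
     (\<forall>u v. (u, v) \<in> (edges F)\<^sup>+ \<longrightarrow> lab F u < lab F v) \<and>
     \<comment> \<open>(F3)\<close>
     (\<forall>i. honest w i \<longrightarrow> card {v\<in>verts F. lab F v = i} = 1) \<and>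
     \<comment> \<open>(F4)\<close>
     (\<forall>i j u v. honest w i \<and> honest w j \<and> i < j \<and> u \<in> verts F \<and> v \<in> verts F \<and>
        lab F u = i \<and> lab F v = j \<longrightarrow> depth F u < depth F v)"

definition subfork :: "fork \<Rightarrow> fork \<Rightarrow> bool" where
  "subfork F F' \<longleftrightarrow> verts F \<subseteq> verts F' \<and> edges F \<subseteq> edges F' \<and>
     (\<forall>v\<in>verts F. lab F v = lab F' v)"

text \<open>A tine: directed path starting at the root, as a list of vertices;
  its length is the number of edges, i.e. length p - 1.\<close>
definition tine :: "fork \<Rightarrow> nat list \<Rightarrow> bool" where
  "tine F p \<longleftrightarrow> p \<noteq> [] \<and> hd p = root F \<and> set p \<subseteq> verts F \<and>
     (\<forall>i. Suc i < length p \<longrightarrow> (p ! i, p ! Suc i) \<in> edges F)"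

definition max_tine :: "fork \<Rightarrow> nat list \<Rightarrow> bool" where
  "max_tine F p \<longleftrightarrow> tine F p \<and> (\<forall>q. tine F q \<longrightarrow> length q - 1 \<le> length p - 1)"

text \<open>Slot s is not settled in F (the side condition s + k \<le> t \<le> n is imposed
  where this is used).\<close>
definition not_settled :: "fork \<Rightarrow> nat \<Rightarrow> bool" where
  "not_settled F s \<longleftrightarrow> (\<exists>p q. max_tine F p \<and> max_tine F q \<and>
     ((\<exists>u\<in>set p. \<exists>v\<in>set q. lab F u = s \<and> lab F v = s \<and> u \<noteq> v) \<or>
      ((\<exists>u\<in>set p. lab F u = s) \<and> \<not> (\<exists>v\<in>set q. lab F v = s))))"

type_synonym play = "(nat \<Rightarrow> fork) \<times> (nat \<Rightarrow> fork)"

definition valid_play :: "bool list \<Rightarrow> play \<Rightarrow> bool" where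
  "valid_play w P \<longleftrightarrow> (let Fs = fst P; As = snd P in
     is_fork [] (As 0) \<and> verts (As 0) = {root (As 0)} \<and>
     (\<forall>t\<in>{1..length w}.
        (\<not> w ! (t - 1) \<longrightarrow>
           (\<exists>p v. max_tine (As (t - 1)) p \<and> v \<notin> verts (As (t - 1)) \<and>
              verts (Fs t) = insert v (verts (As (t - 1))) \<and>
              edges (Fs t) = insert (last p, v) (edges (As (t - 1))) \<and>
              root (Fs t) = root (As (t - 1)) \<and>
              (\<forall>x\<in>verts (As (t - 1)). lab (Fs t) x = lab (As (t - 1)) x) \<and>
              lab (Fs t) v = t)) \<and>
        (w ! (t - 1) \<longrightarrow> is_fork (take t w) (Fs t) \<and> subfork (As (t - 1)) (Fs t)) \<and>
        is_fork (take t w) (As t) \<and> subfork (Fs t) (As t)))"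

definition wins :: "nat \<Rightarrow> nat \<Rightarrow> bool list \<Rightarrow> play \<Rightarrow> bool" where
  "wins s k w P \<longleftrightarrow> (\<exists>t. s + k \<le> t \<and> t \<le> length w \<and> not_settled (snd P t) s)"

text \<open>Adversaries: since w is revealed to the adversary at the start and the
  challenger is deterministic, a (deterministic) adversary is a map from w to its
  whole play.  (Randomised adversaries are mixtures of these and do not increase
  the supremum.)\<close>
definition settle_insec :: "bool list pmf \<Rightarrow> nat \<Rightarrow> nat \<Rightarrow> nat \<Rightarrow> real" where
  "settle_insec D T s k =
     (SUP adv \<in> {adv :: bool list \<Rightarrow> play. \<forall>w. length w = T \<longrightarrow> valid_play w (adv w)}.
        measure_pmf.prob D {w. wins s k w (adv w)})"

definition martingale_cond :: "real \<Rightarrow> nat \<Rightarrow> bool list pmf \<Rightarrow> bool" where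
  "martingale_cond \<epsilon> T W \<longleftrightarrow>
     (\<forall>x. length x < T \<longrightarrow>
        measure_pmf.prob W {w. take (length x) w = x \<and> w ! length x}
          \<le> (1 - \<epsilon>) / 2 * measure_pmf.prob W {w. take (length x) w = x})"

fun bern_list :: "real \<Rightarrow> nat \<Rightarrow> bool list pmf" where
  "bern_list p 0 = return_pmf []"
| "bern_list p (Suc n) =
     map_pmf (\<lambda>(b, bs). b # bs) (pair_pmf (bernoulli_pmf p) (bern_list p n))"

end

theory Submission
  imports Defs
begin

text \<open>Turning an honest slot adversarial never hurts the adversary, so the set of strings on
  which the settlement game can be won is upward closed; exchanging the bits of a string satisfying
  the martingale condition one at a time for independent bits of bias (1 - epsilon) / 2 therefore
  cannot decrease the winning probability.

  For independent bits, a Catalan slot h in (s, s + k], one whose every surrounding interval has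
  more honest than adversarial slots, puts its honest vertex on every longest tine of every fork,
  and so settles slot s. A one-pass scan detects such slots; potential functions of its state
  decay by the factor 1 - epsilon^3 / 4 per slot of the window, so no Catalan slot appears there
  with probability at most 3/2 (1 - epsilon^3 / 4)^k, which is at most exp(- epsilon^3 k / 8)
  once epsilon^3 k is at least 4.\<close>

section \<open>Independent bits\<close>

definition bern_weight :: "real \<Rightarrow> bool list \<Rightarrow> real" where
  "bern_weight q w = prod_list (map (\<lambda>b. if b then q else 1 - q) w)"

definition bern_exp :: "real \<Rightarrow> nat \<Rightarrow> (bool list \<Rightarrow> real) \<Rightarrow> real" where
  "bern_exp q n f = (\<Sum>w | length w = n. bern_weight q w * f w)"

lemma finite_bool_lists_length: "finite {w :: bool list. length w = n}"
  using finite_lists_length_eq[of "UNIV :: bool set" n] by simp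

lemma bern_exp_0 [simp]: "bern_exp q 0 f = f []"
  by (simp add: bern_exp_def bern_weight_def)

lemma bern_exp_Suc:
  "bern_exp q (Suc n) f = q * bern_exp q n (\<lambda>w. f (True # w)) + (1 - q) * bern_exp q n (\<lambda>w. f (False # w))"
proof -
  have lists_Suc: "{w :: bool list. length w = Suc n} = case_prod (#) ` (UNIV \<times> {w. length w = n})"
    by (auto simp: length_Suc_conv image_def)
  have "bern_exp q (Suc n) f = (\<Sum>(b, w) \<in> UNIV \<times> {w :: bool list. length w = n}. bern_weight q (b # w) * f (b # w))"
    unfolding bern_exp_def lists_Suc by (subst sum.reindex) (auto simp: inj_on_def case_prod_unfold)
  also have "\<dots> = (\<Sum>b \<in> UNIV. \<Sum>w | length w = n. bern_weight q (b # w) * f (b # w))"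
    by (rule sum.cartesian_product[symmetric])
  also have "\<dots> = q * bern_exp q n (\<lambda>w. f (True # w)) + (1 - q) * bern_exp q n (\<lambda>w. f (False # w))"
    by (simp add: UNIV_bool bern_exp_def bern_weight_def sum_distrib_left mult.assoc)
  finally show ?thesis .
qed

lemma bern_weight_nonneg: "0 \<le> q \<Longrightarrow> q \<le> 1 \<Longrightarrow> 0 \<le> bern_weight q w"
  unfolding bern_weight_def by (induction w) auto

lemma bern_exp_mono:
  "0 \<le> q \<Longrightarrow> q \<le> 1 \<Longrightarrow> (\<And>w. length w = n \<Longrightarrow> f w \<le> g w) \<Longrightarrow> bern_exp q n f \<le> bern_exp q n g"
  unfolding bern_exp_def by (rule sum_mono) (auto intro: mult_left_mono bern_weight_nonneg)

lemma bern_exp_Suc_le: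
  fixes e :: real
  assumes "-1 \<le> e" "e \<le> 1"
    and "bern_exp ((1 - e) / 2) n (\<lambda>w. f (True # w)) \<le> a"
    and "bern_exp ((1 - e) / 2) n (\<lambda>w. f (False # w)) \<le> b"
  shows "bern_exp ((1 - e) / 2) (Suc n) f \<le> (1 - e) / 2 * a + (1 + e) / 2 * b"
proof -
  have eq: "(1 + e) / 2 = 1 - (1 - e) / 2" by (simp add: field_simps)
  show ?thesis
    unfolding eq bern_exp_Suc using assms by (intro add_mono mult_left_mono) auto
qed

lemma pmf_bern_list:
  assumes "0 \<le> q" "q \<le> 1"
  shows "pmf (bern_list q n) w = (if length w = n then bern_weight q w else 0)"
proof (induction n arbitrary: w)
  case 0
  then show ?case by (auto simp: bern_weight_def indicator_def)
next
  case (Suc n)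
  show ?case
  proof (cases w)
    case Nil
    then show ?thesis by (auto simp: pmf_eq_0_set_pmf)
  next
    case (Cons b v)
    have "pmf (bern_list q (Suc n)) w = pmf (pair_pmf (bernoulli_pmf q) (bern_list q n)) (b, v)"
      using pmf_map_inj'[of "case_prod (#)" _ "(b, v)"] Cons by (simp add: inj_def)
    then show ?thesis
      using Suc Cons assms by (cases b) (auto simp: pmf_pair bern_weight_def)
  qed
qed

lemma set_pmf_bern_list: "0 \<le> q \<Longrightarrow> q \<le> 1 \<Longrightarrow> set_pmf (bern_list q n) \<subseteq> {w. length w = n}"
  by (auto simp: set_pmf_iff pmf_bern_list split: if_splits)

lemma prob_cong_on_support:
  "set_pmf M \<subseteq> L \<Longrightarrow> A \<inter> L = B \<inter> L \<Longrightarrow> measure_pmf.prob M A = measure_pmf.prob M B"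
proof -
  assume "set_pmf M \<subseteq> L" "A \<inter> L = B \<inter> L"
  then have "A \<inter> set_pmf M = B \<inter> set_pmf M" by blast
  then show ?thesis by (metis measure_Int_set_pmf)
qed

lemma prob_eq_sum_lists:
  assumes "set_pmf M \<subseteq> {w :: bool list. length w = n}"
  shows "measure_pmf.prob M A = (\<Sum>w | length w = n. pmf M w * indicator A w)"
proof -
  have "measure_pmf.prob M A = measure_pmf.prob M (A \<inter> {w. length w = n})"
    by (rule prob_cong_on_support[OF assms]) blast
  also have "\<dots> = sum (pmf M) ({w. length w = n} \<inter> A)"
    by (simp add: measure_measure_pmf_finite finite_bool_lists_length Int_commute)
  also have "\<dots> = (\<Sum>w | length w = n. pmf M w * indicator A w)"
    unfolding sum.inter_restrict[OF finite_bool_lists_length] by (rule sum.cong) auto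
  finally show ?thesis .
qed

lemma prob_bern_list:
  "0 \<le> q \<Longrightarrow> q \<le> 1 \<Longrightarrow> measure_pmf.prob (bern_list q n) A = bern_exp q n (indicator A)"
  using prob_eq_sum_lists[OF set_pmf_bern_list] by (simp add: pmf_bern_list bern_exp_def)

section \<open>Forks and tines\<close>

locale fork_of =
  fixes w :: "bool list" and F :: fork
  assumes is_fork_F: "is_fork w F"
begin

lemma no_edge_into_root: "(u, root F) \<notin> edges F"
  using is_fork_F by (simp add: is_fork_def)

lemma parent_unique:
  "v \<in> verts F \<Longrightarrow> v \<noteq> root F \<Longrightarrow> (u, v) \<in> edges F \<Longrightarrow> (u', v) \<in> edges F \<Longrightarrow> u = u'"
  using is_fork_F unfolding is_fork_def by blast

lemma edge_in_verts: "(u, v) \<in> edges F \<Longrightarrow> u \<in> verts F \<and> v \<in> verts F"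
  using is_fork_F by (auto simp: is_fork_def)

lemma root_in_verts: "root F \<in> verts F"
  using is_fork_F by (simp add: is_fork_def)

lemma reachable_from_root: "v \<in> verts F \<Longrightarrow> (root F, v) \<in> (edges F)\<^sup>*"
  using is_fork_F by (simp add: is_fork_def)

lemma lab_root: "lab F (root F) = 0"
  using is_fork_F by (simp add: is_fork_def)

lemma lab_less_trancl: "(u, v) \<in> (edges F)\<^sup>+ \<Longrightarrow> lab F u < lab F v"
  using is_fork_F by (simp add: is_fork_def)

lemma lab_le_length: "v \<in> verts F \<Longrightarrow> lab F v \<le> length w"
  using is_fork_F by (simp add: is_fork_def)

lemma depth_less_honest:
  "honest w i \<Longrightarrow> honest w j \<Longrightarrow> i < j \<Longrightarrow> u \<in> verts F \<Longrightarrow> v \<in> verts F \<Longrightarrow>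
   lab F u = i \<Longrightarrow> lab F v = j \<Longrightarrow> depth F u < depth F v"
  using is_fork_F unfolding is_fork_def by blast

lemma root_relpow_unique:
  "(root F, v) \<in> edges F ^^ m \<Longrightarrow> (root F, v) \<in> edges F ^^ m' \<Longrightarrow> m = m'"
proof (induction m arbitrary: v m')
  case 0
  then show ?case
    using no_edge_into_root by (cases m') (auto elim: relpow_Suc_E)
next
  case (Suc m)
  obtain x where x: "(root F, x) \<in> edges F ^^ m" "(x, v) \<in> edges F"
    using Suc.prems(1) by (auto elim: relpow_Suc_E)
  have v: "v \<in> verts F" "v \<noteq> root F"
    using x(2) edge_in_verts no_edge_into_root by auto
  show ?case
  proof (cases m')
    case 0
    then show ?thesis using Suc.prems(2) v by simp
  next
    case (Suc m'')
    then obtain x' where "(root F, x') \<in> edges F ^^ m''" "(x', v) \<in> edges F"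
      using Suc.prems(2) by (auto elim: relpow_Suc_E)
    then show ?thesis
      using Suc.IH[OF x(1)] parent_unique[OF v x(2)] \<open>m' = Suc m''\<close> by simp
  qed
qed

lemma depth_eq: "(root F, v) \<in> edges F ^^ m \<Longrightarrow> depth F v = m"
  unfolding depth_def by (rule Least_equality) (auto dest: root_relpow_unique)

lemma tine_nth_in_verts: "tine F p \<Longrightarrow> i < length p \<Longrightarrow> p ! i \<in> verts F"
  unfolding tine_def by (meson nth_mem subsetD)

lemma tine_nth_0: "tine F p \<Longrightarrow> p ! 0 = root F"
  unfolding tine_def by (metis hd_conv_nth)

lemma tine_take: "tine F p \<Longrightarrow> 0 < m \<Longrightarrow> tine F (take m p)"
  unfolding tine_def by (auto dest: in_set_takeD)

lemma tine_relpow: "tine F p \<Longrightarrow> i < length p \<Longrightarrow> (root F, p ! i) \<in> edges F ^^ i"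
proof (induction i)
  case 0
  then show ?case by (simp add: tine_nth_0)
next
  case (Suc i)
  then have "(p ! i, p ! Suc i) \<in> edges F" by (simp add: tine_def)
  with Suc show ?case by auto
qed

lemma depth_tine_nth: "tine F p \<Longrightarrow> i < length p \<Longrightarrow> depth F (p ! i) = i"
  using tine_relpow depth_eq by blast

lemma tine_trancl: "tine F p \<Longrightarrow> i < j \<Longrightarrow> j < length p \<Longrightarrow> (p ! i, p ! j) \<in> (edges F)\<^sup>+"
proof (induction j)
  case (Suc j)
  then have "(p ! j, p ! Suc j) \<in> edges F" by (simp add: tine_def)
  with Suc show ?case by (cases "i = j") auto
qed simp

lemma tine_lab_less: "tine F p \<Longrightarrow> i < j \<Longrightarrow> j < length p \<Longrightarrow> lab F (p ! i) < lab F (p ! j)"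
  using tine_trancl lab_less_trancl by blast

lemma tine_lab_inj:
  "tine F p \<Longrightarrow> i < length p \<Longrightarrow> j < length p \<Longrightarrow> lab F (p ! i) = lab F (p ! j) \<Longrightarrow> i = j"
  using tine_lab_less by (metis less_irrefl nat_neq_iff)

lemma tine_common_prefix:
  "tine F p \<Longrightarrow> tine F q \<Longrightarrow> i < length p \<Longrightarrow> i < length q \<Longrightarrow> p ! i = q ! i \<Longrightarrow>
   j \<le> i \<Longrightarrow> p ! j = q ! j"
proof (induction i arbitrary: j)
  case (Suc i)
  have e: "(p ! i, p ! Suc i) \<in> edges F" "(q ! i, q ! Suc i) \<in> edges F"
    using Suc.prems by (auto simp: tine_def)
  have "p ! Suc i \<in> verts F" "p ! Suc i \<noteq> root F"
    using e(1) edge_in_verts no_edge_into_root by auto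
  then have "p ! i = q ! i" using parent_unique e Suc.prems(5) by simp
  then show ?case using Suc by (cases "j = Suc i") auto
qed simp

lemma relpow_tine_exists:
  "(root F, v) \<in> edges F ^^ m \<Longrightarrow> \<exists>p. tine F p \<and> length p = Suc m \<and> last p = v"
proof (induction m arbitrary: v)
  case 0
  then show ?case using root_in_verts by (intro exI[of _ "[root F]"]) (simp add: tine_def)
next
  case (Suc m)
  obtain x where x: "(root F, x) \<in> edges F ^^ m" "(x, v) \<in> edges F"
    using Suc.prems by (auto elim: relpow_Suc_E)
  obtain p where p: "tine F p" "length p = Suc m" "last p = x"
    using Suc.IH[OF x(1)] by blast
  have "p ! m = x" using p last_conv_nth[of p] by (metis Zero_not_Suc diff_Suc_1 list.size(3))
  then have "tine F (p @ [v])"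
    using p x(2) edge_in_verts by (auto simp: tine_def nth_append less_Suc_eq)
  then show ?case using p by (intro exI[of _ "p @ [v]"]) simp
qed

lemma vertex_tine_exists: "v \<in> verts F \<Longrightarrow> \<exists>p. tine F p \<and> length p = Suc (depth F v) \<and> last p = v"
  using reachable_from_root rtrancl_power relpow_tine_exists depth_eq by metis

lemma depth_le_max_tine: "max_tine F q \<Longrightarrow> v \<in> verts F \<Longrightarrow> depth F v \<le> length q - 1"
  using vertex_tine_exists unfolding max_tine_def by fastforce

lemma depth_eq_0_imp_root: "v \<in> verts F \<Longrightarrow> depth F v = 0 \<Longrightarrow> v = root F"
  using vertex_tine_exists by (fastforce simp: tine_def length_Suc_conv)

lemma lab_pos: "v \<in> verts F \<Longrightarrow> v \<noteq> root F \<Longrightarrow> 0 < lab F v"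
  using reachable_from_root lab_less_trancl lab_root by (fastforce simp: rtrancl_eq_or_trancl)

definition honest_vertex :: "nat \<Rightarrow> nat" where
  "honest_vertex i = (THE v. v \<in> verts F \<and> lab F v = i)"

lemma honest_vertex_unique: "honest w i \<Longrightarrow> \<exists>!v. v \<in> verts F \<and> lab F v = i"
proof -
  assume "honest w i"
  then have "card {v \<in> verts F. lab F v = i} = 1"
    using is_fork_F by (simp add: is_fork_def)
  then obtain x where "{v \<in> verts F. lab F v = i} = {x}" by (rule card_1_singletonE)
  then show ?thesis by (intro ex1I[of _ x]) blast+
qed

lemma honest_vertex: "honest w i \<Longrightarrow> honest_vertex i \<in> verts F \<and> lab F (honest_vertex i) = i"
  unfolding honest_vertex_def using honest_vertex_unique by (rule theI')

lemma honest_vertex_eq: "honest w i \<Longrightarrow> v \<in> verts F \<Longrightarrow> lab F v = i \<Longrightarrow> v = honest_vertex i"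
  using honest_vertex honest_vertex_unique by blast

lemma depth_honest_vertex_pos: "honest w i \<Longrightarrow> 0 < depth F (honest_vertex i)"
  using honest_vertex depth_eq_0_imp_root lab_root
  by (metis gr0I honest_def not_one_le_zero)

end

section \<open>Catalan slots settle\<close>

definition step_sign :: "bool list \<Rightarrow> nat \<Rightarrow> int" where
  "step_sign w i = (if w ! (i - 1) then -1 else 1)"

definition margin :: "bool list \<Rightarrow> nat \<Rightarrow> nat \<Rightarrow> int" where
  "margin w a b = (\<Sum>i = a..b. step_sign w i)"

definition catalan_slot :: "bool list \<Rightarrow> nat \<Rightarrow> bool" where
  "catalan_slot w h \<longleftrightarrow> (\<forall>a b. 1 \<le> a \<longrightarrow> a \<le> h \<longrightarrow> h \<le> b \<longrightarrow> b \<le> length w \<longrightarrow> 0 < margin w a b)"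

lemma step_sign_le_1: "step_sign w i \<le> 1"
  by (simp add: step_sign_def)

lemma margin_single: "margin w a a = step_sign w a"
  by (simp add: margin_def)

lemma margin_split: "a \<le> h \<Longrightarrow> h \<le> b \<Longrightarrow> margin w a b = margin w a h + margin w (Suc h) b"
  unfolding margin_def using sum.ub_add_nat[of a h "step_sign w" "b - h"] by simp

lemma margin_Suc: "a \<le> Suc b \<Longrightarrow> margin w a (Suc b) = margin w a b + step_sign w (Suc b)"
  unfolding margin_def by (cases "a = Suc b") (auto simp: atLeastAtMostSuc_conv)

lemma margin_eq_card_diff:
  assumes "1 \<le> a" "b \<le> length w"
  shows "margin w a b = int (card {x \<in> {a..b}. honest w x}) - int (card {x \<in> {a..b}. \<not> honest w x})"
proof -
  have "margin w a b = (\<Sum>i = a..b. if honest w i then 1 else -1)"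
    unfolding margin_def using assms by (intro sum.cong) (auto simp: step_sign_def honest_def)
  then show ?thesis by (simp add: sum.If_cases Int_def)
qed

lemma catalan_slot_honest: "catalan_slot w h \<Longrightarrow> 1 \<le> h \<Longrightarrow> h \<le> length w \<Longrightarrow> honest w h"
  unfolding catalan_slot_def honest_def
  by (auto simp: margin_single step_sign_def split: if_splits dest!: spec[of _ h])

lemma catalan_slot_take: "catalan_slot w h \<Longrightarrow> h \<le> t \<Longrightarrow> catalan_slot (take t w) h"
proof -
  assume "catalan_slot w h" "h \<le> t"
  moreover have "margin (take t w) a b = margin w a b" if "1 \<le> a" "b \<le> t" for a b
    unfolding margin_def using that by (intro sum.cong) (auto simp: step_sign_def)
  ultimately show ?thesis unfolding catalan_slot_def by simp
qed

lemma add_card_le_of_strict_mono_on: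
  fixes f :: "nat \<Rightarrow> nat"
  assumes "strict_mono_on S f" "a \<in> S" "b \<in> S" "a \<le> b"
  shows "f a + card {x \<in> S. a < x \<and> x \<le> b} \<le> f b"
  using assms(3,4)
proof (induction b rule: less_induct)
  case (less b)
  show ?case
  proof (cases "a = b")
    case True
    then show ?thesis by simp
  next
    case False
    define b' where "b' = Max {x \<in> S. a \<le> x \<and> x < b}"
    have fin: "finite {x \<in> S. a \<le> x \<and> x < b}" by simp
    have "a \<in> {x \<in> S. a \<le> x \<and> x < b}" using assms(2) less.prems False by auto
    then have b': "b' \<in> S" "a \<le> b'" "b' < b"
      and b'_max: "\<And>x. x \<in> S \<Longrightarrow> a \<le> x \<Longrightarrow> x < b \<Longrightarrow> x \<le> b'"
      using Max_in[OF fin] Max_ge[OF fin] unfolding b'_def by blast+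
    have "{x \<in> S. a < x \<and> x \<le> b} = insert b {x \<in> S. a < x \<and> x \<le> b'}"
      using b' less.prems False b'_max by force
    then have "card {x \<in> S. a < x \<and> x \<le> b} = Suc (card {x \<in> S. a < x \<and> x \<le> b'})"
      using b' by simp
    moreover have "f a + card {x \<in> S. a < x \<and> x \<le> b'} \<le> f b'" using less.IH b' by blast
    moreover have "f b' < f b" using assms(1) b' less.prems by (auto dest: strict_mono_onD)
    ultimately show ?thesis by simp
  qed
qed

context fork_of
begin

definition slot_depth :: "nat \<Rightarrow> nat" where
  "slot_depth i = (if i = 0 then 0 else depth F (honest_vertex i))"

lemma strict_mono_on_slot_depth: "strict_mono_on ({0} \<union> {i. honest w i}) slot_depth"
proof (rule strict_mono_onI)
  fix i j assume ij: "i \<in> {0} \<union> {i. honest w i}" "j \<in> {0} \<union> {i. honest w i}" "i < j"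
  have "honest w j" using ij by auto
  show "slot_depth i < slot_depth j"
  proof (cases "i = 0")
    case True
    then show ?thesis using depth_honest_vertex_pos[OF \<open>honest w j\<close>] ij by (simp add: slot_depth_def)
  next
    case False
    then have "honest w i" using ij by auto
    then show ?thesis
      using depth_less_honest[OF _ \<open>honest w j\<close> ij(3)] honest_vertex \<open>honest w j\<close> False ij(3)
      by (simp add: slot_depth_def)
  qed
qed

lemma slot_depth_tine_nth:
  assumes q: "tine F q" "m < length q" and slot: "lab F (q ! m) = 0 \<or> honest w (lab F (q ! m))"
  shows "slot_depth (lab F (q ! m)) = m"
proof (cases "lab F (q ! m) = 0")
  case True
  then have "q ! m = root F" using lab_pos[OF tine_nth_in_verts[OF q]] by auto
  then show ?thesis
    using True depth_tine_nth[OF q] depth_eq[of "root F" 0] by (simp add: slot_depth_def)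
next
  case False
  then have "q ! m = honest_vertex (lab F (q ! m))"
    using slot honest_vertex_eq[OF _ tine_nth_in_verts[OF q]] by simp
  then show ?thesis using False depth_tine_nth[OF q] by (simp add: slot_depth_def)
qed

lemma honest_card_le_depth:
  assumes j: "j = 0 \<or> honest w j" "j \<le> \<tau>" and "slot_depth j \<le> D"
    and D: "\<And>i. honest w i \<Longrightarrow> i \<le> \<tau> \<Longrightarrow> depth F (honest_vertex i) \<le> D"
  shows "slot_depth j + card {x \<in> {Suc j..\<tau>}. honest w x} \<le> D"
proof -
  define S where "S = {0} \<union> {i. honest w i}"
  define m where "m = Max {x \<in> S. x \<le> \<tau>}"
  have fin: "finite {x \<in> S. x \<le> \<tau>}" by simp
  have "j \<in> {x \<in> S. x \<le> \<tau>}" using j by (auto simp: S_def)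
  then have m: "m \<in> S" "m \<le> \<tau>" "j \<le> m" and m_max: "\<And>x. x \<in> S \<Longrightarrow> x \<le> \<tau> \<Longrightarrow> x \<le> m"
    using Max_in[OF fin] Max_ge[OF fin] unfolding m_def by blast+
  have "{x \<in> S. j < x \<and> x \<le> m} = {x \<in> {Suc j..\<tau>}. honest w x}"
    using m m_max by (auto simp: S_def)
  moreover have "slot_depth j + card {x \<in> S. j < x \<and> x \<le> m} \<le> slot_depth m"
    using add_card_le_of_strict_mono_on[OF strict_mono_on_slot_depth] j m by (simp add: S_def)
  moreover have "slot_depth m \<le> D"
    using m D \<open>slot_depth j \<le> D\<close> by (auto simp: S_def slot_depth_def)
  ultimately show ?thesis by simp
qed

lemma adversarial_card_ge_tine_suffix:
  assumes q: "tine F q" "l < length q" and "\<forall>v\<in>set q. lab F v \<le> \<tau>"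
    and adv: "\<And>m. l < m \<Longrightarrow> m < length q \<Longrightarrow> \<not> honest w (lab F (q ! m))"
  shows "length q - 1 - l \<le> card {x \<in> {Suc (lab F (q ! l))..\<tau>}. \<not> honest w x}"
proof -
  have "card {l<..<length q} \<le> card {x \<in> {Suc (lab F (q ! l))..\<tau>}. \<not> honest w x}"
  proof (rule card_inj_on_le[where f = "\<lambda>m. lab F (q ! m)"])
    show "inj_on (\<lambda>m. lab F (q ! m)) {l<..<length q}"
      using tine_lab_inj[OF q(1)] by (auto simp: inj_on_def)
    show "(\<lambda>m. lab F (q ! m)) ` {l<..<length q} \<subseteq> {x \<in> {Suc (lab F (q ! l))..\<tau>}. \<not> honest w x}"
    proof (clarsimp)
      fix m assume "l < m" "m < length q"
      then show "Suc (lab F (q ! l)) \<le> lab F (q ! m) \<and> lab F (q ! m) \<le> \<tau> \<and> \<not> honest w (lab F (q ! m))"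
        using tine_lab_less[OF q(1)] assms(3) adv by (simp add: Suc_le_eq)
    qed
  qed simp
  then show ?thesis by simp
qed

text \<open>Honest depths increase with the slot, so a tine at least as deep as every honest vertex up
  to \<open>\<tau>\<close> needs, after its last honest vertex (or the root), at least as many adversarial slots
  as there are honest ones.\<close>

lemma tine_last_honest_margin:
  assumes q: "tine F q" and labs: "\<forall>v\<in>set q. lab F v \<le> \<tau>" and "\<tau> \<le> length w"
    and long: "\<And>i. honest w i \<Longrightarrow> i \<le> \<tau> \<Longrightarrow> depth F (honest_vertex i) \<le> length q - 1"
  shows "\<exists>m < length q. (lab F (q ! m) = 0 \<or> honest w (lab F (q ! m))) \<and>
           margin w (Suc (lab F (q ! m))) \<tau> \<le> 0"
proof -
  define I where "I = {m. m < length q \<and> (lab F (q ! m) = 0 \<or> honest w (lab F (q ! m)))}"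
  define l where "l = Max I"
  define j where "j = lab F (q ! l)"
  have fin: "finite I" by (simp add: I_def)
  have "0 \<in> I" using q tine_nth_0 lab_root by (auto simp: I_def tine_def)
  then have "l \<in> I" unfolding l_def using fin by (intro Max_in) auto
  then have l: "l < length q" "j = 0 \<or> honest w j" by (auto simp: I_def j_def)
  have l_max: "m \<in> I \<Longrightarrow> m \<le> l" for m using Max_ge[OF fin] by (simp add: l_def)
  have "j \<le> \<tau>" using labs l(1) by (simp add: j_def)
  have "slot_depth j = l" using slot_depth_tine_nth[OF q] l by (simp add: j_def)
  then have "l + card {x \<in> {Suc j..\<tau>}. honest w x} \<le> length q - 1"
    using honest_card_le_depth[of j \<tau> "length q - 1"] l \<open>j \<le> \<tau>\<close> long by simp
  moreover have "length q - 1 - l \<le> card {x \<in> {Suc j..\<tau>}. \<not> honest w x}"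
    unfolding j_def using l_max
    by (intro adversarial_card_ge_tine_suffix[OF q l(1) labs]) (fastforce simp: I_def)
  ultimately have "margin w (Suc j) \<tau> \<le> 0"
    using margin_eq_card_diff[of "Suc j" \<tau> w] \<open>\<tau> \<le> length w\<close> by simp
  then show ?thesis using l by (auto simp: j_def)
qed

lemma depth_honest_less_tine_nth:
  assumes q: "tine F q" "m < length q" and "honest w (lab F (q ! m))" "honest w i" "i < lab F (q ! m)"
  shows "depth F (honest_vertex i) < m"
proof -
  define j where "j = lab F (q ! m)"
  have "q ! m = honest_vertex j"
    unfolding j_def by (rule honest_vertex_eq[OF assms(3) tine_nth_in_verts[OF q] refl])
  then have "depth F (honest_vertex j) = m" using depth_tine_nth[OF q] by simp
  moreover have "depth F (honest_vertex i) < depth F (honest_vertex j)"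
    using depth_less_honest[OF assms(4) assms(3)[folded j_def]] honest_vertex assms(3-5)
    by (simp add: j_def)
  ultimately show ?thesis by simp
qed

lemma catalan_vertex_on_tine:
  assumes cat: "catalan_slot w h" and "1 \<le> h"
  shows "h \<le> \<tau> \<Longrightarrow> \<tau> \<le> length w \<Longrightarrow> tine F q \<Longrightarrow> \<forall>v\<in>set q. lab F v \<le> \<tau> \<Longrightarrow>
    (\<And>i. honest w i \<Longrightarrow> i \<le> \<tau> \<Longrightarrow> depth F (honest_vertex i) \<le> length q - 1) \<Longrightarrow>
    honest_vertex h \<in> set q"
proof (induction \<tau> arbitrary: q rule: less_induct)
  case (less \<tau>)
  note q = less.prems(3)
  show ?case
  proof (cases "\<exists>m < length q. honest w (lab F (q ! m)) \<and> h < lab F (q ! m)")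
    case True
    then obtain m where m: "m < length q" "honest w (lab F (q ! m))" "h < lab F (q ! m)" by blast
    define i where "i = lab F (q ! m)"
    have "depth F (honest_vertex i') \<le> length (take m q) - 1" if "honest w i'" "i' \<le> i - 1" for i'
    proof -
      have "i' < lab F (q ! m)" using that(2) m(3) by (simp add: i_def)
      then show ?thesis using depth_honest_less_tine_nth[OF q m(1,2) that(1)] m(1) by auto
    qed
    moreover have "m \<noteq> 0" using m(3) tine_nth_0[OF q] lab_root by (cases m) auto
    moreover have "\<forall>v\<in>set (take m q). lab F v \<le> i - 1"
      using tine_lab_less[OF q _ m(1)] by (fastforce simp: i_def in_set_conv_nth)
    moreover have "i \<le> \<tau>" using less.prems(4) m(1) by (simp add: i_def)
    ultimately have "honest_vertex h \<in> set (take m q)"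
      using less.IH[of "i - 1" "take m q"] tine_take[OF q] m(3) less.prems(2) by (simp add: i_def)
    then show ?thesis by (meson in_set_takeD)
  next
    case False
    note no_later_honest = this
    obtain m where m: "m < length q" "lab F (q ! m) = 0 \<or> honest w (lab F (q ! m))"
      and margin: "margin w (Suc (lab F (q ! m))) \<tau> \<le> 0"
      using tine_last_honest_margin[OF q less.prems(4,2,5)] by blast
    show ?thesis
    proof (cases "lab F (q ! m) = h")
      case True
      have "honest w h" using catalan_slot_honest cat assms(2) less.prems(1,2) by simp
      then have "q ! m = honest_vertex h"
        using honest_vertex_eq[OF _ tine_nth_in_verts[OF q m(1)] True] by simp
      then show ?thesis using m(1) nth_mem by metis
    next
      case False
      then have "Suc (lab F (q ! m)) \<le> h" using m no_later_honest assms(2) by fastforce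
      then have "0 < margin w (Suc (lab F (q ! m))) \<tau>"
        using cat less.prems(1,2) unfolding catalan_slot_def by simp
      then show ?thesis using margin by simp
    qed
  qed
qed

lemma catalan_vertex_on_max_tine:
  assumes "catalan_slot w h" "1 \<le> h" "h \<le> length w" "max_tine F p"
  shows "honest_vertex h \<in> set p"
  using assms lab_le_length depth_le_max_tine honest_vertex
  by (intro catalan_vertex_on_tine[of h "length w"]) (auto simp: max_tine_def tine_def)

text \<open>The Catalan vertex sits at the same depth on all maximal tines, which therefore agree before it.\<close>

lemma max_tines_agree_before_catalan:
  assumes cat: "catalan_slot w h" "h \<le> length w" and p: "max_tine F p" and q: "max_tine F q"
    and u: "u \<in> set p" "lab F u < h"
  shows "u \<in> set q"
proof -
  have tp: "tine F p" and tq: "tine F q" using p q by (auto simp: max_tine_def)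
  have "honest w h" "1 \<le> h" using catalan_slot_honest cat u by auto
  obtain i where i: "i < length p" "p ! i = honest_vertex h"
    using catalan_vertex_on_max_tine[OF cat(1) \<open>1 \<le> h\<close> cat(2) p] by (metis in_set_conv_nth)
  obtain i' where i': "i' < length q" "q ! i' = honest_vertex h"
    using catalan_vertex_on_max_tine[OF cat(1) \<open>1 \<le> h\<close> cat(2) q] by (metis in_set_conv_nth)
  have "i = i'" using depth_tine_nth[OF tp i(1)] depth_tine_nth[OF tq i'(1)] i i' by simp
  obtain a where a: "a < length p" "u = p ! a" using u(1) by (metis in_set_conv_nth)
  have "a < i"
  proof (rule ccontr)
    assume "\<not> a < i"
    then have "lab F (p ! i) \<le> lab F (p ! a)"
      using tine_lab_less[OF tp _ a(1)] by (cases "i = a") (auto intro: less_imp_le)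
    then show False using i(2) honest_vertex[OF \<open>honest w h\<close>] u(2) a(2) by simp
  qed
  then have "p ! a = q ! a"
    using tine_common_prefix[OF tp tq i(1)] i i' \<open>i = i'\<close> by simp
  moreover have "a < length q" using \<open>a < i\<close> \<open>i = i'\<close> i'(1) by simp
  ultimately show ?thesis using a nth_mem by metis
qed

lemma catalan_slot_settles:
  assumes "catalan_slot w h" "s < h" "h \<le> length w"
  shows "\<not> not_settled F s"
proof
  assume "not_settled F s"
  then obtain p q where pq: "max_tine F p" "max_tine F q"
    "(\<exists>u\<in>set p. \<exists>v\<in>set q. lab F u = s \<and> lab F v = s \<and> u \<noteq> v) \<or>
      ((\<exists>u\<in>set p. lab F u = s) \<and> \<not> (\<exists>v\<in>set q. lab F v = s))"
    unfolding not_settled_def by blast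
  have shared: "u \<in> set q" if "u \<in> set p" "lab F u = s" for u
    using max_tines_agree_before_catalan[OF assms(1,3) pq(1,2)] that assms(2) by simp
  have "tine F q" using pq by (simp add: max_tine_def)
  then have unique: "u = v" if "u \<in> set q" "v \<in> set q" "lab F u = lab F v" for u v
    using that tine_lab_inj by (metis in_set_conv_nth)
  from pq(3) show False
    using shared unique by blast
qed

end

section \<open>The honest play\<close>

definition path_edges :: "nat list \<Rightarrow> (nat \<times> nat) set" where
  "path_edges L = {(L ! i, L ! Suc i) | i. Suc i < length L}"

definition path_fork :: "nat list \<Rightarrow> fork" where
  "path_fork L = \<lparr>verts = set L, edges = path_edges L, root = hd L, lab = id\<rparr>"

lemma path_edges_snoc: "L \<noteq> [] \<Longrightarrow> path_edges (L @ [x]) = insert (last L, x) (path_edges L)"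
proof (intro set_eqI iffI)
  fix e assume L: "L \<noteq> []" and "e \<in> path_edges (L @ [x])"
  then obtain i where i: "e = ((L @ [x]) ! i, (L @ [x]) ! Suc i)" "Suc i < Suc (length L)"
    by (auto simp: path_edges_def)
  show "e \<in> insert (last L, x) (path_edges L)"
  proof (cases "Suc i < length L")
    case True
    then show ?thesis using i by (auto simp: path_edges_def nth_append)
  next
    case False
    then have "i = length L - 1" using i by simp
    then show ?thesis using i L by (simp add: nth_append last_conv_nth)
  qed
next
  fix e assume L: "L \<noteq> []" and "e \<in> insert (last L, x) (path_edges L)"
  then consider "e = (last L, x)" | i where "e = (L ! i, L ! Suc i)" "Suc i < length L"
    unfolding path_edges_def by blast
  then show "e \<in> path_edges (L @ [x])"
  proof cases
    case 1
    then show ?thesis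
      using L unfolding path_edges_def
      by (intro CollectI exI[of _ "length L - 1"]) (simp add: nth_append last_conv_nth)
  next
    case 2
    then show ?thesis
      unfolding path_edges_def by (intro CollectI exI[of _ i]) (simp add: nth_append)
  qed
qed

lemma path_edges_less: "sorted_wrt (<) L \<Longrightarrow> (u, v) \<in> path_edges L \<Longrightarrow> u < v"
  by (auto simp: path_edges_def sorted_wrt_iff_nth_less)

lemma path_edges_trancl_less: "sorted_wrt (<) L \<Longrightarrow> (u, v) \<in> (path_edges L)\<^sup>+ \<Longrightarrow> u < v"
  by (erule trancl_induct) (auto dest: path_edges_less)

lemma relpow_path_edges_nth: "j < length L \<Longrightarrow> (hd L, L ! j) \<in> path_edges L ^^ j"
proof (induction j)
  case 0
  then show ?case by (simp add: hd_conv_nth)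
next
  case (Suc j)
  then have "(L ! j, L ! Suc j) \<in> path_edges L" by (auto simp: path_edges_def)
  with Suc show ?case by auto
qed

lemma relpow_path_edges:
  assumes "sorted_wrt (<) L" "L \<noteq> []"
  shows "(hd L, v) \<in> path_edges L ^^ m \<Longrightarrow> m < length L \<and> v = L ! m"
proof (induction m arbitrary: v)
  case 0
  then show ?case using assms(2) by (simp add: hd_conv_nth)
next
  case (Suc m)
  obtain x where x: "(hd L, x) \<in> path_edges L ^^ m" "(x, v) \<in> path_edges L"
    using Suc.prems by (auto elim: relpow_Suc_E)
  obtain i where "x = L ! i" "v = L ! Suc i" "Suc i < length L"
    using x(2) by (auto simp: path_edges_def)
  moreover have "m < length L" "x = L ! m" using Suc.IH[OF x(1)] by auto
  ultimately show ?case
    using assms(1) strict_sorted_iff nth_eq_iff_index_eq by (metis Suc_lessD)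
qed

lemma depth_path_fork:
  "sorted_wrt (<) L \<Longrightarrow> j < length L \<Longrightarrow> depth (path_fork L) (L ! j) = j"
proof -
  assume L: "sorted_wrt (<) L" "j < length L"
  have "j = m" if "(hd L, L ! j) \<in> path_edges L ^^ m" for m
    using relpow_path_edges[OF L(1) _ that] L strict_sorted_iff nth_eq_iff_index_eq by fastforce
  then show ?thesis
    unfolding depth_def path_fork_def
    by (intro Least_equality) (auto intro: relpow_path_edges_nth[OF L(2)])
qed

lemma path_edges_parent_unique:
  assumes "sorted_wrt (<) L" "(u, v) \<in> path_edges L" "(u', v) \<in> path_edges L"
  shows "u = u'"
  using assms strict_sorted_iff nth_eq_iff_index_eq
  by (auto simp: path_edges_def)

lemma depth_path_fork_less:
  assumes L: "sorted_wrt (<) L" and uv: "u \<in> set L" "v \<in> set L" "u < v"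
  shows "depth (path_fork L) u < depth (path_fork L) v"
proof -
  obtain a where a: "a < length L" "u = L ! a" using uv(1) by (metis in_set_conv_nth)
  obtain b where b: "b < length L" "v = L ! b" using uv(2) by (metis in_set_conv_nth)
  have "a < b"
  proof (rule ccontr)
    assume "\<not> a < b"
    then have "v \<le> u" using sorted_wrt_nth_less[OF L _ a(1), of b] a(2) b(2) by (cases "a = b") auto
    then show False using uv(3) by simp
  qed
  then show ?thesis using depth_path_fork[OF L a(1)] depth_path_fork[OF L b(1)] a(2) b(2) by simp
qed

lemma is_fork_path_fork:
  assumes L: "sorted_wrt (<) L" "L \<noteq> []" "hd L = 0"
    and slots: "set L \<subseteq> {..length w}" "{i. honest w i} \<subseteq> set L"
  shows "is_fork w (path_fork L)"
  unfolding is_fork_def path_fork_def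
proof (simp only: fork.simps L(3), intro conjI allI impI ballI)
  show "finite (set L)" by simp
  show "0 \<in> set L" using hd_in_set[OF L(2)] L(3) by simp
  show "path_edges L \<subseteq> set L \<times> set L" by (auto simp: path_edges_def)
  show "(u, 0) \<notin> path_edges L" for u using path_edges_less[OF L(1), of u 0] by auto
  show "\<exists>!u. (u, v) \<in> path_edges L" if v: "v \<in> set L" "v \<noteq> 0" for v
  proof -
    obtain j where j: "j < length L" "v = L ! j" using v(1) by (metis in_set_conv_nth)
    have "j \<noteq> 0" using v(2) j L(2,3) by (metis hd_conv_nth)
    then have e: "(L ! (j - 1), v) \<in> path_edges L"
      using j unfolding path_edges_def by (intro CollectI exI[of _ "j - 1"]) simp
    show ?thesis
      using e path_edges_parent_unique[OF L(1) _ e] by blast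
  qed
  show "(0, v) \<in> (path_edges L)\<^sup>*" if v: "v \<in> set L" for v
  proof -
    obtain j where "j < length L" "v = L ! j" using v by (metis in_set_conv_nth)
    then show ?thesis using relpow_path_edges_nth[of j L] L(3) by (simp add: relpow_imp_rtrancl)
  qed
  show "id v \<le> length w" if "v \<in> set L" for v using that slots(1) by auto
  show "id 0 = 0" by simp
  show "id u < id v" if "(u, v) \<in> (path_edges L)\<^sup>+" for u v
    using path_edges_trancl_less[OF L(1) that] by simp
  show "card {v \<in> set L. id v = i} = 1" if "honest w i" for i
  proof -
    have "{v \<in> set L. id v = i} = {i}" using that slots(2) by auto
    then show ?thesis by simp
  qed
  show "depth \<lparr>verts = set L, edges = path_edges L, root = 0, lab = id\<rparr> u
      < depth \<lparr>verts = set L, edges = path_edges L, root = 0, lab = id\<rparr> v"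
    if "honest w i \<and> honest w j \<and> i < j \<and> u \<in> set L \<and> v \<in> set L \<and> id u = i \<and> id v = j" for i j u v
    using that depth_path_fork_less[OF L(1), of u v] by (auto simp: path_fork_def L(3))
qed

lemma tine_path_fork: "L \<noteq> [] \<Longrightarrow> tine (path_fork L) L"
  by (auto simp: tine_def path_fork_def path_edges_def)

lemma max_tine_path_fork:
  assumes "sorted_wrt (<) L" "L \<noteq> []" and fork: "is_fork w (path_fork L)"
  shows "max_tine (path_fork L) L"
  unfolding max_tine_def
proof (intro conjI allI impI tine_path_fork[OF assms(2)])
  interpret fork_of w "path_fork L" by (rule fork_of.intro[OF fork])
  fix q assume q: "tine (path_fork L) q"
  then have "q \<noteq> []" by (simp add: tine_def)
  then have "(hd L, q ! (length q - 1)) \<in> path_edges L ^^ (length q - 1)"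
    using tine_relpow[OF q] by (simp add: path_fork_def)
  then show "length q - 1 \<le> length L - 1" using relpow_path_edges[OF assms(1,2)] by fastforce
qed

definition honest_slots :: "bool list \<Rightarrow> nat \<Rightarrow> nat list" where
  "honest_slots w t = 0 # filter (honest w) [1..<Suc t]"

definition honest_fork :: "bool list \<Rightarrow> nat \<Rightarrow> fork" where
  "honest_fork w t = path_fork (honest_slots w t)"

lemma sorted_honest_slots: "sorted_wrt (<) (honest_slots w t)"
  by (auto simp: honest_slots_def sorted_wrt_filter simp del: upt_Suc)

lemma honest_take: "honest (take t w) i \<longleftrightarrow> honest w i \<and> i \<le> t"
  by (auto simp: honest_def)

lemma is_fork_honest_fork: "t \<le> length w \<Longrightarrow> is_fork (take t w) (honest_fork w t)"
  unfolding honest_fork_def using sorted_honest_slots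
  by (intro is_fork_path_fork) (auto simp: honest_slots_def honest_take honest_def)

lemma honest_slots_Suc:
  "honest_slots w (Suc t) = (if honest w (Suc t) then honest_slots w t @ [Suc t] else honest_slots w t)"
  by (simp add: honest_slots_def)

definition honest_extension :: "fork \<Rightarrow> fork \<Rightarrow> nat \<Rightarrow> bool" where
  "honest_extension A F t \<longleftrightarrow> (\<exists>p v. max_tine A p \<and> v \<notin> verts A \<and>
     verts F = insert v (verts A) \<and> edges F = insert (last p, v) (edges A) \<and>
     root F = root A \<and> (\<forall>x\<in>verts A. lab F x = lab A x) \<and> lab F v = t)"

lemma valid_play_iff:
  "valid_play w (Fs, As) \<longleftrightarrow> is_fork [] (As 0) \<and> verts (As 0) = {root (As 0)} \<and>
     (\<forall>t\<in>{1..length w}.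
        (\<not> w ! (t - 1) \<longrightarrow> honest_extension (As (t - 1)) (Fs t) t) \<and>
        (w ! (t - 1) \<longrightarrow> is_fork (take t w) (Fs t) \<and> subfork (As (t - 1)) (Fs t)) \<and>
        is_fork (take t w) (As t) \<and> subfork (Fs t) (As t))"
  by (simp add: valid_play_def honest_extension_def)

lemma honest_extension_subfork: "honest_extension A F t \<Longrightarrow> subfork A F"
  by (auto simp: honest_extension_def subfork_def)

lemma subfork_refl: "subfork F F"
  by (simp add: subfork_def)

lemma subfork_trans: "subfork A B \<Longrightarrow> subfork B C \<Longrightarrow> subfork A C"
  by (auto simp: subfork_def)

lemma honest_extension_honest_fork:
  assumes "honest w (Suc t)" "Suc t \<le> length w"
  shows "honest_extension (honest_fork w t) (honest_fork w (Suc t)) (Suc t)"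
proof -
  have "max_tine (honest_fork w t) (honest_slots w t)"
    unfolding honest_fork_def using is_fork_honest_fork[of t w] assms(2)
    by (intro max_tine_path_fork sorted_honest_slots) (auto simp: honest_slots_def honest_fork_def)
  moreover have "Suc t \<notin> set (honest_slots w t)" by (auto simp: honest_slots_def)
  ultimately show ?thesis
    using assms(1) path_edges_snoc[of "honest_slots w t" "Suc t"]
    unfolding honest_extension_def
    by (intro exI[of _ "honest_slots w t"] exI[of _ "Suc t"])
      (auto simp: honest_fork_def path_fork_def honest_slots_Suc honest_slots_def)
qed

lemma valid_play_honest: "valid_play w (honest_fork w, honest_fork w)"
  unfolding valid_play_iff
proof (intro conjI ballI)
  show "is_fork [] (honest_fork w 0)" using is_fork_honest_fork[of 0 w] by simp
  show "verts (honest_fork w 0) = {root (honest_fork w 0)}"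
    by (simp add: honest_fork_def path_fork_def honest_slots_def)
  fix t assume t: "t \<in> {1..length w}"
  then obtain t' where t': "t = Suc t'" "Suc t' \<le> length w" by (cases t) auto
  show "is_fork (take t w) (honest_fork w t)" using is_fork_honest_fork t by simp
  show "subfork (honest_fork w t) (honest_fork w t)" by (rule subfork_refl)
  show "\<not> w ! (t - 1) \<longrightarrow> honest_extension (honest_fork w (t - 1)) (honest_fork w t) t"
    using honest_extension_honest_fork[of w t'] t' by (simp add: honest_def)
  show "w ! (t - 1) \<longrightarrow> is_fork (take t w) (honest_fork w t) \<and>
      subfork (honest_fork w (t - 1)) (honest_fork w t)"
  proof
    assume "w ! (t - 1)"
    then have "honest_fork w (t - 1) = honest_fork w t"
      using t' by (simp add: honest_fork_def honest_slots_Suc honest_def)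
    then show "is_fork (take t w) (honest_fork w t) \<and> subfork (honest_fork w (t - 1)) (honest_fork w t)"
      using is_fork_honest_fork[of t w] t by (simp add: subfork_refl)
  qed
qed

section \<open>Settlement insecurity as the probability of a winnable string\<close>

lemma is_fork_mono: "is_fork x F \<Longrightarrow> list_all2 (\<le>) x y \<Longrightarrow> is_fork y F"
proof -
  assume fork: "is_fork x F" and xy: "list_all2 (\<le>) x y"
  from xy have "length x = length y" by (rule list_all2_lengthD)
  moreover have "honest x i" if "honest y i" for i
  proof -
    have "i - 1 < length y" using that by (auto simp: honest_def)
    then have "x ! (i - 1) \<le> y ! (i - 1)" by (rule list_all2_nthD2[OF xy])
    then show ?thesis using that \<open>length x = length y\<close> by (auto simp: honest_def)
  qed
  ultimately show "is_fork y F"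
    using fork unfolding is_fork_def by (elim conjE, intro conjI) (simp | blast)+
qed

text \<open>Turning honest slots adversarial preserves any play: at a switched slot the adversary
  simply plays the fork the challenger would have produced.\<close>

lemma valid_play_mono:
  assumes "valid_play w (Fs, As)" and le: "list_all2 (\<le>) w w'"
  shows "valid_play w' (\<lambda>t. if \<not> w ! (t - 1) \<and> w' ! (t - 1) then As t else Fs t, As)"
  unfolding valid_play_iff
proof (intro conjI ballI)
  have len: "length w' = length w" using le by (simp add: list_all2_lengthD)
  note play = assms(1)[unfolded valid_play_iff]
  show "is_fork [] (As 0)" "verts (As 0) = {root (As 0)}" using play by auto
  fix t assume "t \<in> {1..length w'}"
  then have t: "t \<in> {1..length w}" "t - 1 < length w" using len by auto
  have take_le: "list_all2 (\<le>) (take t w) (take t w')" by (rule list_all2_takeI[OF le])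
  have le_t: "w ! (t - 1) \<le> w' ! (t - 1)" using list_all2_nthD[OF le t(2)] .
  note play_t = play[THEN conjunct2, THEN conjunct2, rule_format, OF t(1)]
  show "is_fork (take t w') (As t)" using play_t is_fork_mono take_le by blast
  show "subfork (if \<not> w ! (t - 1) \<and> w' ! (t - 1) then As t else Fs t) (As t)"
    using play_t by (auto simp: subfork_refl)
  show "\<not> w' ! (t - 1) \<longrightarrow> honest_extension (As (t - 1)) (if \<not> w ! (t - 1) \<and> w' ! (t - 1) then As t else Fs t) t"
    using play_t le_t by auto
  have "subfork (As (t - 1)) (As t)" if "\<not> w ! (t - 1)"
    using play_t that honest_extension_subfork subfork_trans by blast
  then show "w' ! (t - 1) \<longrightarrow> is_fork (take t w') (if \<not> w ! (t - 1) \<and> w' ! (t - 1) then As t else Fs t) \<and>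
      subfork (As (t - 1)) (if \<not> w ! (t - 1) \<and> w' ! (t - 1) then As t else Fs t)"
    using play_t is_fork_mono[OF _ take_le] by auto
qed

definition winnable :: "nat \<Rightarrow> nat \<Rightarrow> nat \<Rightarrow> bool list set" where
  "winnable T s k = {w. length w = T \<and> (\<exists>P. valid_play w P \<and> wins s k w P)}"

lemma winnable_mono: "x \<in> winnable T s k \<Longrightarrow> list_all2 (\<le>) x y \<Longrightarrow> y \<in> winnable T s k"
proof -
  assume x: "x \<in> winnable T s k" and xy: "list_all2 (\<le>) x y"
  then obtain Fs As where "valid_play x (Fs, As)" "wins s k x (Fs, As)" "length x = T"
    by (auto simp: winnable_def)
  moreover have "length y = length x" using xy by (simp add: list_all2_lengthD)
  ultimately show ?thesis
    using valid_play_mono[OF _ xy] unfolding winnable_def wins_def by fastforce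
qed

lemma winnable_empty: "T < s + k \<Longrightarrow> winnable T s k = {}"
  unfolding winnable_def wins_def by auto

lemma prob_wins_le_winnable:
  assumes "set_pmf D \<subseteq> {w. length w = T}" "\<forall>w. length w = T \<longrightarrow> valid_play w (adv w)"
  shows "measure_pmf.prob D {w. wins s k w (adv w)} \<le> measure_pmf.prob D (winnable T s k)"
proof -
  have "measure_pmf.prob D {w. wins s k w (adv w)} = measure_pmf.prob D ({w. wins s k w (adv w)} \<inter> set_pmf D)"
    by (simp add: measure_Int_set_pmf)
  also have "\<dots> \<le> measure_pmf.prob D (winnable T s k)"
  proof (rule measure_pmf.finite_measure_mono)
    show "{w. wins s k w (adv w)} \<inter> set_pmf D \<subseteq> winnable T s k"
      using assms unfolding winnable_def by blast
  qed simp
  finally show ?thesis .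
qed

lemma settle_insec_eq_prob_winnable:
  assumes supp: "set_pmf D \<subseteq> {w. length w = T}"
  shows "settle_insec D T s k = measure_pmf.prob D (winnable T s k)"
proof -
  define Adv where "Adv = {adv :: bool list \<Rightarrow> play. \<forall>w. length w = T \<longrightarrow> valid_play w (adv w)}"
  define f where "f adv = measure_pmf.prob D {w. wins s k w (adv w)}" for adv
  define best where "best w = (if \<exists>P. valid_play w P \<and> wins s k w P
      then SOME P. valid_play w P \<and> wins s k w P else (honest_fork w, honest_fork w))" for w
  have "valid_play w (best w)" for w
    using someI_ex[of "\<lambda>P. valid_play w P \<and> wins s k w P"] valid_play_honest
    by (auto simp: best_def)
  then have best: "best \<in> Adv" by (simp add: Adv_def)
  have "winnable T s k \<subseteq> {w. wins s k w (best w)}"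
    using someI_ex[of "\<lambda>P. valid_play _ P \<and> wins s k _ P"] by (auto simp: winnable_def best_def)
  then have "measure_pmf.prob D (winnable T s k) \<le> f best"
    unfolding f_def by (rule measure_pmf.finite_measure_mono) simp
  moreover have le: "f adv \<le> measure_pmf.prob D (winnable T s k)" if "adv \<in> Adv" for adv
    using prob_wins_le_winnable[OF supp] that by (simp add: Adv_def f_def)
  ultimately have eq: "f best = measure_pmf.prob D (winnable T s k)"
    using best by (simp add: order_antisym)
  have "Sup (f ` Adv) = f best"
  proof (rule cSup_eq_maximum)
    show "f best \<in> f ` Adv" using best by (rule imageI)
    show "x \<le> f best" if "x \<in> f ` Adv" for x using that le eq by auto
  qed
  then show ?thesis using eq unfolding settle_insec_def Adv_def f_def by simp
qed

section \<open>Domination under the martingale condition\<close>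

lemma lists_snoc_eq: "{y :: bool list. length y = Suc n} = (\<lambda>(x, b). x @ [b]) ` ({x. length x = n} \<times> UNIV)"
proof (intro set_eqI iffI)
  fix y :: "bool list" assume "y \<in> {y. length y = Suc n}"
  then have "y = butlast y @ [last y]" "length (butlast y) = n"
    by (auto intro: append_butlast_last_id[symmetric])
  then show "y \<in> (\<lambda>(x, b). x @ [b]) ` ({x. length x = n} \<times> UNIV)"
    by (intro image_eqI[of _ _ "(butlast y, last y)"]) auto
qed auto

text \<open>\<open>hybrid n\<close> is the probability of U when the first n bits are drawn from W and the
  remaining ones independently. Passing from n to n + 1 replaces an independent bit, which is 1
  with probability q, by a bit of W, which is 1 with probability at most q; since \<open>cond_bern\<close>
  is larger after a 1, this cannot increase \<open>hybrid\<close>.\<close>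

locale dominated_by_bernoulli =
  fixes W :: "bool list pmf" and T :: nat and q :: real and U :: "bool list set"
  assumes supp: "set_pmf W \<subseteq> {w. length w = T}"
    and q: "0 \<le> q" "q \<le> 1"
    and mart: "\<And>x. length x < T \<Longrightarrow>
      measure_pmf.prob W {w. take (length x) w = x \<and> w ! length x} \<le> q * measure_pmf.prob W {w. take (length x) w = x}"
    and upward_closed: "\<And>x y. x \<in> U \<Longrightarrow> list_all2 (\<le>) x y \<Longrightarrow> y \<in> U"
begin

definition prefix_prob :: "bool list \<Rightarrow> real" where
  "prefix_prob x = measure_pmf.prob W {w. take (length x) w = x}"

definition cond_bern :: "bool list \<Rightarrow> real" where
  "cond_bern x = bern_exp q (T - length x) (\<lambda>v. indicator U (x @ v))"

definition hybrid :: "nat \<Rightarrow> real" where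
  "hybrid n = (\<Sum>x | length x = n. prefix_prob x * cond_bern x)"

lemma cond_bern_split:
  "length x < T \<Longrightarrow> cond_bern x = q * cond_bern (x @ [True]) + (1 - q) * cond_bern (x @ [False])"
proof -
  assume "length x < T"
  then have "T - length x = Suc (T - length (x @ [True]))" by simp
  then show ?thesis unfolding cond_bern_def by (simp add: bern_exp_Suc)
qed

lemma cond_bern_mono: "cond_bern (x @ [False]) \<le> cond_bern (x @ [True])"
  unfolding cond_bern_def
proof (simp only: length_append_singleton, rule bern_exp_mono[OF q])
  fix v :: "bool list"
  have "list_all2 (\<le>) (x @ False # v) (x @ True # v)"
    by (intro list_all2_appendI) (auto simp: list_all2_refl)
  then show "indicator U ((x @ [False]) @ v) \<le> (indicator U ((x @ [True]) @ v) :: real)"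
    using upward_closed by (auto simp: indicator_def)
qed

lemma take_Suc_eq_snoc:
  "length w = T \<Longrightarrow> length x < T \<Longrightarrow>
    take (Suc (length x)) w = x @ [b] \<longleftrightarrow> take (length x) w = x \<and> w ! length x = b"
  by (auto simp: take_Suc_conv_app_nth)

lemma prefix_prob_split:
  assumes "length x < T"
  shows "prefix_prob x = prefix_prob (x @ [True]) + prefix_prob (x @ [False])"
proof -
  have "prefix_prob x = measure_pmf.prob W
      ({w. take (Suc (length x)) w = x @ [True]} \<union> {w. take (Suc (length x)) w = x @ [False]})"
    unfolding prefix_prob_def using assms
    by (intro prob_cong_on_support[OF supp]) (auto simp: take_Suc_eq_snoc)
  also have "\<dots> = prefix_prob (x @ [True]) + prefix_prob (x @ [False])"
    unfolding prefix_prob_def by (subst measure_pmf.finite_measure_Union) auto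
  finally show ?thesis .
qed

lemma prefix_prob_snoc_True: "length x < T \<Longrightarrow> prefix_prob (x @ [True]) \<le> q * prefix_prob x"
proof -
  assume l: "length x < T"
  have "prefix_prob (x @ [True]) = measure_pmf.prob W {w. take (length x) w = x \<and> w ! length x}"
    unfolding prefix_prob_def using l by (intro prob_cong_on_support[OF supp]) (auto simp: take_Suc_eq_snoc)
  then show ?thesis using mart[OF l] by (simp add: prefix_prob_def)
qed

lemma hybrid_Suc_le:
  assumes "n < T"
  shows "hybrid (Suc n) \<le> hybrid n"
proof -
  have "hybrid (Suc n) = (\<Sum>(x, b) \<in> {x :: bool list. length x = n} \<times> UNIV. prefix_prob (x @ [b]) * cond_bern (x @ [b]))"
    unfolding hybrid_def lists_snoc_eq by (subst sum.reindex) (auto simp: inj_on_def case_prod_unfold)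
  also have "\<dots> = (\<Sum>x | length x = n. prefix_prob (x @ [True]) * cond_bern (x @ [True]) +
      prefix_prob (x @ [False]) * cond_bern (x @ [False]))"
    by (simp add: sum.cartesian_product[symmetric] UNIV_bool add.commute)
  also have "\<dots> \<le> hybrid n"
    unfolding hybrid_def
  proof (rule sum_mono)
    fix x :: "bool list" assume "x \<in> {x. length x = n}"
    then have l: "length x < T" using assms by simp
    define a b where "a = prefix_prob (x @ [True])" and "b = prefix_prob (x @ [False])"
    define g1 g0 where "g1 = cond_bern (x @ [True])" and "g0 = cond_bern (x @ [False])"
    have split: "prefix_prob x = a + b" using prefix_prob_split[OF l] by (simp add: a_def b_def)
    have "a \<le> q * (a + b)" using prefix_prob_snoc_True[OF l] split by (simp add: a_def)
    moreover have "g0 \<le> g1" using cond_bern_mono by (simp add: g0_def g1_def)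
    ultimately have "a * (g1 - g0) \<le> q * (a + b) * (g1 - g0)" by (intro mult_right_mono) auto
    then have "a * g1 + b * g0 \<le> (a + b) * (q * g1 + (1 - q) * g0)" by (simp add: algebra_simps)
    also have "\<dots> = prefix_prob x * cond_bern x"
      using split cond_bern_split[OF l] by (simp add: g0_def g1_def)
    finally show "a * g1 + b * g0 \<le> prefix_prob x * cond_bern x" .
  qed
  finally show ?thesis .
qed

lemma hybrid_0: "hybrid 0 = bern_exp q T (indicator U)"
proof -
  have "{x :: bool list. length x = 0} = {[]}" by auto
  then show ?thesis by (simp add: hybrid_def prefix_prob_def cond_bern_def)
qed

lemma hybrid_T: "hybrid T = measure_pmf.prob W U"
proof -
  have "hybrid T = (\<Sum>x | length x = T. pmf W x * indicator U x)"
    unfolding hybrid_def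
  proof (intro sum.cong refl)
    fix x :: "bool list" assume x: "x \<in> {x. length x = T}"
    have "prefix_prob x = measure_pmf.prob W {x}"
      unfolding prefix_prob_def using x by (intro prob_cong_on_support[OF supp]) auto
    then show "prefix_prob x * cond_bern x = pmf W x * indicator U x"
      using x by (simp add: cond_bern_def measure_pmf_single)
  qed
  also have "\<dots> = measure_pmf.prob W U" using prob_eq_sum_lists[OF supp] by simp
  finally show ?thesis .
qed

lemma prob_le_bern_exp: "measure_pmf.prob W U \<le> bern_exp q T (indicator U)"
proof -
  have "hybrid n \<le> hybrid 0" if "n \<le> T" for n
    using that by (induction n) (auto intro: order_trans[OF hybrid_Suc_le])
  from this[of T] show ?thesis by (simp add: hybrid_0 hybrid_T)
qed

end

section \<open>Detecting Catalan slots\<close>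

text \<open>A one-pass detector for Catalan slots in (s, s + k]. After u bits have been read,
  d is the deficit, the largest excess of adversarial over honest slots in a suffix of the prefix
  read so far, and a positive g is the margin of the slots from the latest candidate up to u, where
  a candidate is an honest slot read at deficit 0.\<close>

fun scan :: "nat \<Rightarrow> nat \<Rightarrow> nat \<Rightarrow> nat \<Rightarrow> nat \<Rightarrow> bool list \<Rightarrow> nat" where
  "scan s k u d g [] = g"
| "scan s k u d g (b # bs) = scan s k (Suc u) (if b then Suc d else d - 1)
     (if b then g - 1 else if 0 < g then Suc g else if d = 0 \<and> s \<le> u \<and> u < s + k then 1 else 0) bs"

fun deficit :: "bool list \<Rightarrow> nat \<Rightarrow> nat" where
  "deficit w 0 = 0"
| "deficit w (Suc u) = (if w ! u then Suc (deficit w u) else deficit w u - 1)"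

fun lead :: "nat \<Rightarrow> nat \<Rightarrow> bool list \<Rightarrow> nat \<Rightarrow> nat" where
  "lead s k w 0 = 0"
| "lead s k w (Suc u) = (if w ! u then lead s k w u - 1 else if 0 < lead s k w u then Suc (lead s k w u)
     else if deficit w u = 0 \<and> s \<le> u \<and> u < s + k then 1 else 0)"

lemma scan_drop: "u \<le> length w \<Longrightarrow> scan s k u (deficit w u) (lead s k w u) (drop u w) = scan s k 0 0 0 w"
proof (induction u)
  case (Suc u)
  then have "drop u w = w ! u # drop (Suc u) w" by (simp add: Cons_nth_drop_Suc)
  with Suc show ?case by simp
qed simp

lemma scan_eq_lead: "scan s k 0 0 0 w = lead s k w (length w)"
  using scan_drop[of "length w" w s k] by simp

lemma deficit_le_margin: "1 \<le> a \<Longrightarrow> a \<le> u \<Longrightarrow> - int (deficit w u) \<le> margin w a u"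
proof (induction u)
  case (Suc u)
  then show ?case
    by (cases "a = Suc u") (auto simp: margin_single margin_Suc step_sign_def)
qed simp

lemma lead_witness:
  "0 < lead s k w u \<Longrightarrow> \<exists>h. s < h \<and> h \<le> s + k \<and> h \<le> u \<and>
     (\<forall>a. 1 \<le> a \<longrightarrow> a \<le> h \<longrightarrow> 1 \<le> margin w a h) \<and> (\<forall>b. h \<le> b \<longrightarrow> b \<le> u \<longrightarrow> 1 \<le> margin w h b) \<and>
     int (lead s k w u) = margin w h u"
proof (induction u)
  case (Suc u)
  show ?case
  proof (cases "0 < lead s k w u")
    case True
    then obtain h where h: "s < h" "h \<le> s + k" "h \<le> u" "\<forall>a. 1 \<le> a \<longrightarrow> a \<le> h \<longrightarrow> 1 \<le> margin w a h"
      "\<forall>b. h \<le> b \<longrightarrow> b \<le> u \<longrightarrow> 1 \<le> margin w h b" "int (lead s k w u) = margin w h u"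
      using Suc.IH by blast
    have lead: "int (lead s k w (Suc u)) = margin w h (Suc u)"
      using h(3,6) True by (auto simp: margin_Suc step_sign_def of_nat_diff)
    have "1 \<le> margin w h b" if "h \<le> b" "b \<le> Suc u" for b
      using h(5) lead Suc.prems that by (cases "b = Suc u") auto
    then show ?thesis using h lead by (intro exI[of _ h]) auto
  next
    case False
    then have new: "lead s k w (Suc u) = 1" "\<not> w ! u" "deficit w u = 0" "s \<le> u" "u < s + k"
      using Suc.prems by (auto split: if_splits)
    have "1 \<le> margin w a (Suc u)" if "1 \<le> a" "a \<le> Suc u" for a
    proof (cases "a = Suc u")
      case True
      then show ?thesis using new by (simp add: margin_single step_sign_def)
    next
      case False
      then show ?thesis
        using deficit_le_margin[of a u w] that new by (simp add: margin_Suc step_sign_def)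
    qed
    then show ?thesis
      using new by (intro exI[of _ "Suc u"]) (auto simp: margin_single step_sign_def le_Suc_eq)
  qed
qed simp

lemma scan_pos_catalan_slot:
  assumes "0 < scan s k 0 0 0 w"
  shows "\<exists>h. s < h \<and> h \<le> s + k \<and> catalan_slot w h"
proof -
  obtain h where h: "s < h" "h \<le> s + k" "h \<le> length w"
    and left: "\<forall>a. 1 \<le> a \<longrightarrow> a \<le> h \<longrightarrow> 1 \<le> margin w a h"
    and right: "\<forall>b. h \<le> b \<longrightarrow> b \<le> length w \<longrightarrow> 1 \<le> margin w h b"
    using lead_witness[of s k w "length w"] assms unfolding scan_eq_lead by blast
  have "step_sign w h = 1" using right h(3) step_sign_le_1[of w h] by (auto simp: margin_single)
  have "0 < margin w a b" if "1 \<le> a" "a \<le> h" "h \<le> b" "b \<le> length w" for a b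
  proof -
    have "margin w a b = margin w a h + margin w (Suc h) b" using margin_split that(2,3) .
    moreover have "margin w h b = 1 + margin w (Suc h) b"
      using margin_split[of h h b w] that(3) \<open>step_sign w h = 1\<close> by (simp add: margin_single)
    ultimately show ?thesis using left right that by fastforce
  qed
  with h show ?thesis unfolding catalan_slot_def by auto
qed

lemma wins_imp_scan_eq_0:
  assumes "valid_play w P" "wins s k w P"
  shows "scan s k 0 0 0 w = 0"
proof (rule ccontr)
  assume "scan s k 0 0 0 w \<noteq> 0"
  then obtain h where h: "s < h" "h \<le> s + k" "catalan_slot w h"
    using scan_pos_catalan_slot by blast
  obtain t where t: "s + k \<le> t" "t \<le> length w" "not_settled (snd P t) s"
    using assms(2) by (auto simp: wins_def)
  have "is_fork (take t w) (snd P t)"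
    using assms(1) t h unfolding valid_play_def Let_def by auto
  then interpret fork_of "take t w" "snd P t" by (rule fork_of.intro)
  show False
    using catalan_slot_settles[OF catalan_slot_take[OF h(3)]] h t by simp
qed

section \<open>Potential functions for the detector\<close>

text \<open>With r = (1 - e) / (1 + e) one has (1 - e) / 2 + (1 + e) / 2 * r^2 = r, so r ^ g is
  a supermartingale of the lead once no new candidates can appear.\<close>

lemma scan_after_window:
  fixes e :: real
  assumes e: "0 < e" "e < 1" and "s + k \<le> u"
  shows "bern_exp ((1 - e) / 2) n (\<lambda>bs. ((1 - e) / (1 + e)) ^ scan s k u d g bs) \<le> ((1 - e) / (1 + e)) ^ g"
  using assms(3)
proof (induction n arbitrary: u d g)
  case (Suc n)
  define r where "r = (1 - e) / (1 + e)"
  have IH: "bern_exp ((1 - e) / 2) n (\<lambda>bs. r ^ scan s k (Suc u) d' g' bs) \<le> r ^ g'" for d' g'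
    using Suc by (simp add: r_def)
  have "bern_exp ((1 - e) / 2) (Suc n) (\<lambda>bs. r ^ scan s k u d g bs)
      \<le> (1 - e) / 2 * r ^ (g - 1) + (1 + e) / 2 * r ^ (if 0 < g then Suc g else 0)"
  proof (rule bern_exp_Suc_le)
    show "-1 \<le> e" "e \<le> 1" using e by auto
    show "bern_exp ((1 - e) / 2) n (\<lambda>w. r ^ scan s k u d g (True # w)) \<le> r ^ (g - 1)"
      using IH[of "Suc d" "g - 1"] by simp
    show "bern_exp ((1 - e) / 2) n (\<lambda>w. r ^ scan s k u d g (False # w)) \<le> r ^ (if 0 < g then Suc g else 0)"
      using IH[of "d - 1" "if 0 < g then Suc g else 0"] Suc.prems by (cases g) simp_all
  qed
  also have "\<dots> \<le> r ^ g"
  proof (cases g)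
    case (Suc g')
    have r: "(1 + e) * r = 1 - e" using e by (simp add: r_def)
    have "(1 + e) / 2 * r * r = ((1 + e) * r) * r / 2" by simp
    also have "\<dots> = (1 - e) * r / 2" using r by simp
    finally have "(1 - e) / 2 + (1 + e) / 2 * r * r = r" using r by (simp add: field_simps)
    moreover have "(1 - e) / 2 * r ^ g' + (1 + e) / 2 * r ^ Suc (Suc g')
        = r ^ g' * ((1 - e) / 2 + (1 + e) / 2 * r * r)"
      by (simp add: field_simps)
    ultimately show ?thesis using Suc by simp
  qed (simp add: field_simps)
  finally show ?case by (simp add: r_def)
qed simp

definition window_potential :: "real \<Rightarrow> nat \<Rightarrow> nat \<Rightarrow> real" where
  "window_potential e d g = (1 + e\<^sup>2 / 2) ^ (d + g) * (1 - e) ^ g"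

lemma window_step_coeffs:
  fixes e :: real
  assumes "0 < e" "e < 1"
  defines "b \<equiv> 1 + e\<^sup>2 / 2" and "\<theta> \<equiv> 1 - e ^ 3 / 4"
  shows "(1 - e) / 2 * b + (1 + e) / 2 * (b * (1 - e)) \<le> \<theta>"
    and "(1 - e) / 2 * b\<^sup>2 + (1 + e) / 2 \<le> \<theta> * b"
    and "(1 - e) / 2 + (1 + e) / 2 * b * (1 - e)\<^sup>2 \<le> \<theta> * (1 - e)"
    and "(1 - e) / 2 + (1 + e) / 2 * (1 - e)\<^sup>2 \<le> \<theta> * (1 - e)"
proof -
  have "\<theta> - ((1 - e) / 2 * b + (1 + e) / 2 * (b * (1 - e))) = e / 2 + e ^ 4 / 4"
    by (simp add: b_def \<theta>_def field_simps power2_eq_square power3_eq_cube power4_eq_xxxx)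
  moreover have "0 \<le> e / 2 + e ^ 4 / 4" using assms(1) by simp
  ultimately show "(1 - e) / 2 * b + (1 + e) / 2 * (b * (1 - e)) \<le> \<theta>" by linarith
  have "\<theta> * b - ((1 - e) / 2 * b\<^sup>2 + (1 + e) / 2) = e ^ 3 * (2 - e) / 8"
    by (simp add: b_def \<theta>_def field_simps power2_eq_square power3_eq_cube)
  moreover have "0 \<le> e ^ 3 * (2 - e) / 8" using assms(1,2) by simp
  ultimately show "(1 - e) / 2 * b\<^sup>2 + (1 + e) / 2 \<le> \<theta> * b" by linarith
  have "\<theta> * (1 - e) - ((1 - e) / 2 + (1 + e) / 2 * b * (1 - e)\<^sup>2) = (1 - e) * e\<^sup>2 * (1 - e + e\<^sup>2) / 4"
    by (simp add: b_def \<theta>_def field_simps power2_eq_square power3_eq_cube)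
  moreover have "0 \<le> (1 - e) * e\<^sup>2 * (1 - e + e\<^sup>2) / 4"
    using assms(1,2) by (intro divide_nonneg_pos mult_nonneg_nonneg) (auto intro: add_nonneg_nonneg)
  ultimately show "(1 - e) / 2 + (1 + e) / 2 * b * (1 - e)\<^sup>2 \<le> \<theta> * (1 - e)" by linarith
  have "\<theta> * (1 - e) - ((1 - e) / 2 + (1 + e) / 2 * (1 - e)\<^sup>2) = (1 - e) * e\<^sup>2 * (2 - e) / 4"
    by (simp add: \<theta>_def field_simps power2_eq_square power3_eq_cube)
  moreover have "0 \<le> (1 - e) * e\<^sup>2 * (2 - e) / 4" using assms(1,2) by simp
  ultimately show "(1 - e) / 2 + (1 + e) / 2 * (1 - e)\<^sup>2 \<le> \<theta> * (1 - e)" by linarith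
qed

lemma window_potential_step:
  fixes e :: real
  assumes e: "0 < e" "e < 1"
  shows "(1 - e) / 2 * window_potential e (Suc d) (g - 1)
       + (1 + e) / 2 * window_potential e (d - 1) (if 0 < g then Suc g else if d = 0 then 1 else 0)
     \<le> (1 - e ^ 3 / 4) * window_potential e d g"
proof -
  define b r where "b = 1 + e\<^sup>2 / 2" and "r = 1 - e"
  have b: "0 \<le> b" and r: "0 \<le> r" using e by (auto simp: b_def r_def)
  have W: "window_potential e d' g' = b ^ (d' + g') * r ^ g'" for d' g'
    by (simp add: window_potential_def b_def r_def)
  note coeffs = window_step_coeffs[OF e, folded b_def]
  show ?thesis
  proof (cases g)
    case 0
    show ?thesis
    proof (cases d)
      case 0
      then show ?thesis using \<open>g = 0\<close> coeffs(1) by (simp add: W r_def)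
    next
      case (Suc d')
      have "b ^ d' * ((1 - e) / 2 * b\<^sup>2 + (1 + e) / 2) \<le> b ^ d' * ((1 - e ^ 3 / 4) * b)"
        using coeffs(2) b by (intro mult_left_mono) auto
      then show ?thesis using \<open>g = 0\<close> Suc by (simp add: W algebra_simps power2_eq_square)
    qed
  next
    case (Suc g')
    show ?thesis
    proof (cases d)
      case 0
      have "b ^ Suc g' * r ^ g' * ((1 - e) / 2 + (1 + e) / 2 * b * r\<^sup>2)
          \<le> b ^ Suc g' * r ^ g' * ((1 - e ^ 3 / 4) * r)"
        using coeffs(3) b r by (intro mult_left_mono) (auto simp: r_def)
      then show ?thesis using Suc 0 by (simp add: W algebra_simps power2_eq_square)
    next
      case (Suc d')
      have "b ^ Suc (Suc (d' + g')) * r ^ g' * ((1 - e) / 2 + (1 + e) / 2 * r\<^sup>2)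
          \<le> b ^ Suc (Suc (d' + g')) * r ^ g' * ((1 - e ^ 3 / 4) * r)"
        using coeffs(4) b r by (intro mult_left_mono) (auto simp: r_def)
      then show ?thesis using \<open>g = Suc g'\<close> Suc by (simp add: W algebra_simps power2_eq_square)
    qed
  qed
qed

lemma window_potential_ge:
  fixes e :: real
  assumes "0 < e" "e < 1"
  shows "((1 - e) / (1 + e)) ^ g \<le> window_potential e d g"
proof -
  have "((1 - e) / (1 + e)) ^ g \<le> (1 - e) ^ g"
    using assms by (intro power_mono) (auto simp: divide_le_eq)
  also have "\<dots> \<le> (1 + e\<^sup>2 / 2) ^ (d + g) * (1 - e) ^ g"
    using assms mult_right_mono[of 1 "(1 + e\<^sup>2 / 2) ^ (d + g)" "(1 - e) ^ g"] by simp
  finally show ?thesis by (simp add: window_potential_def)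
qed

lemma scan_in_window:
  fixes e :: real
  assumes e: "0 < e" "e < 1"
  shows "s \<le> u \<Longrightarrow> u \<le> s + k \<Longrightarrow> s + k \<le> u + n \<Longrightarrow>
    bern_exp ((1 - e) / 2) n (\<lambda>bs. ((1 - e) / (1 + e)) ^ scan s k u d g bs)
      \<le> (1 - e ^ 3 / 4) ^ (s + k - u) * window_potential e d g"
proof (induction n arbitrary: u d g)
  case 0
  then show ?case using scan_after_window[OF e, of s k u 0 d g] window_potential_ge[OF e, of g d] by simp
next
  case (Suc n)
  show ?case
  proof (cases "u = s + k")
    case True
    then show ?thesis
      using scan_after_window[OF e, of s k u "Suc n" d g] window_potential_ge[OF e, of g d] by simp
  next
    case False
    with Suc.prems have u: "u < s + k" by simp
    define r \<theta> where "r = (1 - e) / (1 + e)" and "\<theta> = 1 - e ^ 3 / 4"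
    define g' where "g' = (if 0 < g then Suc g else if d = 0 then 1 else 0)"
    have "e ^ 3 \<le> 1" using e by (simp add: power_le_one)
    then have "0 \<le> \<theta> ^ (s + k - Suc u)" by (simp add: \<theta>_def)
    have "bern_exp ((1 - e) / 2) (Suc n) (\<lambda>bs. r ^ scan s k u d g bs)
        \<le> (1 - e) / 2 * (\<theta> ^ (s + k - Suc u) * window_potential e (Suc d) (g - 1))
          + (1 + e) / 2 * (\<theta> ^ (s + k - Suc u) * window_potential e (d - 1) g')"
      using Suc.IH[of "Suc u"] Suc.prems u e
      by (intro bern_exp_Suc_le) (simp_all add: r_def \<theta>_def g'_def)
    also have "\<dots> = \<theta> ^ (s + k - Suc u) * ((1 - e) / 2 * window_potential e (Suc d) (g - 1)
        + (1 + e) / 2 * window_potential e (d - 1) g')"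
      by (simp add: algebra_simps)
    also have "\<dots> \<le> \<theta> ^ (s + k - Suc u) * (\<theta> * window_potential e d g)"
      using window_potential_step[OF e, of d g] \<open>0 \<le> \<theta> ^ _\<close>
      by (intro mult_left_mono) (simp_all add: \<theta>_def g'_def)
    also have "\<dots> = \<theta> ^ (s + k - u) * window_potential e d g"
      using u by (simp add: Suc_diff_Suc[symmetric] del: Suc_diff_Suc)
    finally show ?thesis by (simp add: r_def \<theta>_def)
  qed
qed

lemma power_le_affine:
  fixes a b c :: real
  assumes "0 \<le> a" "a \<le> 1" "1 \<le> c" "1 \<le> b" "b \<le> 1 + a * (c - 1)"
  shows "b ^ n \<le> 1 + a * (c ^ n - 1)"
proof (induction n)
  case (Suc n)
  have "b \<le> c" using assms mult_left_le_one_le[of "c - 1" a] by simp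
  have "b ^ Suc n \<le> b * (1 + a * (c ^ n - 1))" using Suc assms by (simp add: mult_left_mono)
  also have "\<dots> = b + a * b * (c ^ n - 1)" by (simp add: algebra_simps)
  also have "\<dots> \<le> (1 + a * (c - 1)) + a * c * (c ^ n - 1)"
    using assms \<open>b \<le> c\<close> by (intro add_mono mult_right_mono mult_left_mono) auto
  also have "\<dots> = 1 + a * (c ^ Suc n - 1)" by (simp add: algebra_simps)
  finally show ?case .
qed simp

definition prefix_potential :: "real \<Rightarrow> nat \<Rightarrow> nat \<Rightarrow> real" where
  "prefix_potential e m d = (1 - e\<^sup>2 / 2) ^ m * (1 + e) ^ d + (1 / e) * (1 - (1 - e\<^sup>2 / 2) ^ m)"

lemma prefix_potential_step:
  fixes e :: real
  assumes e: "0 < e" "e < 1"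
  shows "(1 - e) / 2 * prefix_potential e m (Suc d) + (1 + e) / 2 * prefix_potential e m (d - 1)
    \<le> prefix_potential e (Suc m) d"
proof -
  define t c M where "t = 1 - e\<^sup>2 / 2" and "c = 1 + e" and "M = 1 / e"
  have "e\<^sup>2 \<le> 1" using e by (simp add: power_le_one)
  then have t: "0 \<le> t" "t \<le> 1" using e by (auto simp: t_def)
  have M: "0 \<le> M" using e by (simp add: M_def)
  have P: "prefix_potential e m' d' = t ^ m' * c ^ d' + M * (1 - t ^ m')" for m' d'
    by (simp add: prefix_potential_def t_def c_def M_def)
  define q where "q = (1 - e) / 2"
  have "(1 + e) / 2 = 1 - q" by (simp add: q_def field_simps)
  then have goal: "?thesis \<longleftrightarrow>
      q * (t ^ m * c ^ Suc d + M * (1 - t ^ m)) + (1 - q) * (t ^ m * c ^ (d - 1) + M * (1 - t ^ m))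
        \<le> t ^ Suc m * c ^ d + M * (1 - t ^ Suc m)"
    by (simp only: P q_def)
  show ?thesis
  proof (cases d)
    case 0
    have key: "q * c + (1 - q) = t + M * (1 - t)"
      using e by (simp add: q_def t_def c_def M_def field_simps power2_eq_square)
    have "q * (t ^ m * c ^ Suc d + M * (1 - t ^ m)) + (1 - q) * (t ^ m * c ^ (d - 1) + M * (1 - t ^ m))
        = t ^ m * (q * c + (1 - q)) + M * (1 - t ^ m)"
      using 0 by (simp add: algebra_simps)
    also have "\<dots> = t ^ Suc m * c ^ d + M * (1 - t ^ Suc m)"
      unfolding key using 0 by (simp add: algebra_simps)
    finally show ?thesis using goal by simp
  next
    case (Suc d')
    have key: "q * c\<^sup>2 + (1 - q) = t * c"
      using e by (simp add: q_def t_def c_def field_simps power2_eq_square)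
    have "q * (t ^ m * c ^ Suc d + M * (1 - t ^ m)) + (1 - q) * (t ^ m * c ^ (d - 1) + M * (1 - t ^ m))
        = t ^ m * c ^ d' * (q * c\<^sup>2 + (1 - q)) + M * (1 - t ^ m)"
      using Suc by (simp add: algebra_simps power2_eq_square)
    also have "\<dots> = t ^ Suc m * c ^ d + M * (1 - t ^ m)"
      unfolding key using Suc by (simp add: algebra_simps)
    also have "\<dots> \<le> t ^ Suc m * c ^ d + M * (1 - t ^ Suc m)"
      using t M by (intro add_left_mono mult_left_mono) (auto simp: mult_left_le_one_le)
    finally show ?thesis using goal by simp
  qed
qed

lemma window_potential_le_prefix_potential:
  fixes e :: real
  assumes "0 < e" "e < 1"
  shows "window_potential e d 0 \<le> 1 + e / 2 * (prefix_potential e 0 d - 1)"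
  using power_le_affine[of "e / 2" "1 + e" "1 + e\<^sup>2 / 2" d] assms
  by (simp add: window_potential_def prefix_potential_def power2_eq_square)

lemma scan_before_window:
  fixes e :: real
  assumes e: "0 < e" "e < 1"
  shows "u \<le> s \<Longrightarrow> s + k \<le> u + n \<Longrightarrow>
    bern_exp ((1 - e) / 2) n (\<lambda>bs. ((1 - e) / (1 + e)) ^ scan s k u d 0 bs)
      \<le> (1 - e ^ 3 / 4) ^ k * (1 + e / 2 * (prefix_potential e (s - u) d - 1))"
proof (induction n arbitrary: u d)
  case 0
  then have "u = s" "k = 0" by auto
  moreover have "1 \<le> window_potential e d 0" by (simp add: window_potential_def)
  ultimately show ?case using window_potential_le_prefix_potential[OF e, of d] by simp
next
  case (Suc n)
  define r \<theta> where "r = (1 - e) / (1 + e)" and "\<theta> = 1 - e ^ 3 / 4"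
  have "e ^ 3 \<le> 1" using e by (simp add: power_le_one)
  then have \<theta>: "0 \<le> \<theta> ^ k" by (simp add: \<theta>_def)
  show ?case
  proof (cases "u = s")
    case True
    have "bern_exp ((1 - e) / 2) (Suc n) (\<lambda>bs. r ^ scan s k u d 0 bs) \<le> \<theta> ^ k * window_potential e d 0"
      using scan_in_window[OF e, of s u k "Suc n" d 0] True Suc.prems by (simp add: r_def \<theta>_def)
    also have "\<dots> \<le> \<theta> ^ k * (1 + e / 2 * (prefix_potential e (s - u) d - 1))"
      using window_potential_le_prefix_potential[OF e, of d] \<theta> True by (intro mult_left_mono) auto
    finally show ?thesis by (simp add: r_def \<theta>_def)
  next
    case False
    with Suc.prems have u: "u < s" by simp
    define B where "B d' = 1 + e / 2 * (prefix_potential e (s - Suc u) d' - 1)" for d'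
    have "bern_exp ((1 - e) / 2) (Suc n) (\<lambda>bs. r ^ scan s k u d 0 bs)
        \<le> (1 - e) / 2 * (\<theta> ^ k * B (Suc d)) + (1 + e) / 2 * (\<theta> ^ k * B (d - 1))"
      using Suc.IH[of "Suc u"] Suc.prems u e
      by (intro bern_exp_Suc_le) (simp_all add: r_def \<theta>_def B_def)
    also have "\<dots> = \<theta> ^ k * (1 + e / 2 * (((1 - e) / 2 * prefix_potential e (s - Suc u) (Suc d)
        + (1 + e) / 2 * prefix_potential e (s - Suc u) (d - 1)) - 1))"
      by (simp add: B_def field_simps)
    also have "\<dots> \<le> \<theta> ^ k * (1 + e / 2 * (prefix_potential e (Suc (s - Suc u)) d - 1))"
      using prefix_potential_step[OF e, of "s - Suc u" d] \<theta> e by (intro mult_left_mono add_left_mono) auto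
    also have "Suc (s - Suc u) = s - u" using u by simp
    finally show ?thesis by (simp add: r_def \<theta>_def)
  qed
qed

lemma scan_bound:
  fixes e :: real
  assumes e: "0 < e" "e < 1" and "s + k \<le> T"
  shows "bern_exp ((1 - e) / 2) T (\<lambda>w. ((1 - e) / (1 + e)) ^ scan s k 0 0 0 w) \<le> 3 / 2 * (1 - e ^ 3 / 4) ^ k"
proof -
  define t where "t = 1 - e\<^sup>2 / 2"
  have "e\<^sup>2 \<le> 1" using e by (simp add: power_le_one)
  then have "0 \<le> t" "t \<le> 1" using e by (auto simp: t_def)
  then have ts: "0 \<le> t ^ s" "t ^ s \<le> 1" by (auto simp: power_le_one)
  have "prefix_potential e s 0 = t ^ s * 1 + 1 / e * (1 - t ^ s)" by (simp add: prefix_potential_def t_def)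
  also have "\<dots> \<le> 1 / e * t ^ s + 1 / e * (1 - t ^ s)"
    using e ts mult_right_mono[of 1 "1 / e" "t ^ s"] by simp
  finally have "prefix_potential e s 0 \<le> 1 / e" by (simp add: algebra_simps)
  then have "e / 2 * (prefix_potential e s 0 - 1) \<le> 1 / 2"
    using e mult_left_mono[of "prefix_potential e s 0 - 1" "1 / e" "e / 2"] by simp
  moreover have "e ^ 3 \<le> 1" using e by (simp add: power_le_one)
  ultimately have "(1 - e ^ 3 / 4) ^ k * (1 + e / 2 * (prefix_potential e s 0 - 1)) \<le> (1 - e ^ 3 / 4) ^ k * (3 / 2)"
    by (intro mult_left_mono) auto
  then show ?thesis using scan_before_window[OF e, of 0 s k T 0] assms(3) by simp
qed

section \<open>The settlement bound\<close>

lemma settle_insec_bern_le: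
  fixes e :: real
  assumes e: "0 < e" "e < 1"
  shows "settle_insec (bern_list ((1 - e) / 2) T) T s k \<le> 3 / 2 * (1 - e ^ 3 / 4) ^ k"
proof -
  define q r where "q = (1 - e) / 2" and "r = (1 - e) / (1 + e)"
  have q: "0 \<le> q" "q \<le> 1" and "0 \<le> r" using e by (auto simp: q_def r_def)
  have insec: "settle_insec (bern_list q T) T s k = bern_exp q T (indicator (winnable T s k))"
    using settle_insec_eq_prob_winnable[OF set_pmf_bern_list[OF q]] prob_bern_list[OF q] by simp
  show ?thesis
  proof (cases "T < s + k")
    case True
    have "e ^ 3 \<le> 1" using e by (simp add: power_le_one)
    then show ?thesis using True insec by (simp add: winnable_empty bern_exp_def q_def)
  next
    case False
    have "indicator (winnable T s k) w \<le> r ^ scan s k 0 0 0 w" for w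
      using wins_imp_scan_eq_0 \<open>0 \<le> r\<close> by (auto simp: winnable_def indicator_def)
    then have "bern_exp q T (indicator (winnable T s k)) \<le> bern_exp q T (\<lambda>w. r ^ scan s k 0 0 0 w)"
      by (intro bern_exp_mono[OF q])
    also have "\<dots> \<le> 3 / 2 * (1 - e ^ 3 / 4) ^ k" using scan_bound[OF e] False by (simp add: q_def r_def)
    finally show ?thesis using insec by (simp add: q_def)
  qed
qed

lemma settle_insec_le_bern:
  fixes e :: real
  assumes e: "0 < e" "e < 1" and supp: "set_pmf W \<subseteq> {w. length w = T}" and "martingale_cond e T W"
  shows "settle_insec W T s k \<le> settle_insec (bern_list ((1 - e) / 2) T) T s k"
proof -
  define q where "q = (1 - e) / 2"
  have q: "0 \<le> q" "q \<le> 1" using e by (auto simp: q_def)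
  interpret dominated_by_bernoulli W T q "winnable T s k"
    using supp q assms(4) winnable_mono by unfold_locales (auto simp: martingale_cond_def q_def)
  show ?thesis
    using prob_le_bern_exp settle_insec_eq_prob_winnable[OF supp]
      settle_insec_eq_prob_winnable[OF set_pmf_bern_list[OF q]] prob_bern_list[OF q]
    by (simp add: q_def)
qed

lemma decay_le_exp:
  fixes e :: real
  assumes e: "0 < e" "e < 1" and "4 \<le> e ^ 3 * real k"
  shows "3 / 2 * (1 - e ^ 3 / 4) ^ k \<le> exp (- (1 / 8) * (e ^ 3 * real k))"
proof -
  define a where "a = e ^ 3 * real k / 4"
  have "e ^ 3 \<le> 1" using e by (simp add: power_le_one)
  then have "(1 - e ^ 3 / 4) ^ k \<le> exp (- (e ^ 3 / 4)) ^ k"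
    using exp_ge_add_one_self[of "- (e ^ 3 / 4)"] by (intro power_mono) auto
  also have "\<dots> = exp (- a)" by (simp add: a_def exp_of_nat_mult[symmetric] algebra_simps)
  finally have "(1 - e ^ 3 / 4) ^ k \<le> exp (- a)" .
  moreover have "3 / 2 \<le> 1 + a / 2" using assms(3) by (simp add: a_def mult.commute)
  then have "3 / 2 \<le> exp (a / 2)" using exp_ge_add_one_self[of "a / 2"] by linarith
  ultimately have "3 / 2 * (1 - e ^ 3 / 4) ^ k \<le> exp (a / 2) * exp (- a)"
    using \<open>e ^ 3 \<le> 1\<close> by (intro mult_mono) auto
  also have "\<dots> = exp (- (1 / 8) * (e ^ 3 * real k))" by (simp add: a_def flip: exp_add)
  finally show ?thesis .
qed

theorem theorem1:
  "\<exists>c::real. c > 0 \<and> (\<exists>C::real. C \<ge> 0 \<and> (\<exists>K::real.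
     \<forall>(\<epsilon>::real) (s::nat) (k::nat) (T::nat) (W::bool list pmf).
       0 < \<epsilon> \<and> \<epsilon> < 1 \<and> set_pmf W \<subseteq> {w. length w = T} \<and> martingale_cond \<epsilon> T W \<longrightarrow>
       settle_insec W T s k \<le> settle_insec (bern_list ((1 - \<epsilon>) / 2) T) T s k \<and>
       (K \<le> \<epsilon> ^ 3 * real k \<longrightarrow>
          settle_insec (bern_list ((1 - \<epsilon>) / 2) T) T s k
            \<le> exp (- c * (\<epsilon> ^ 3 * (1 - C * \<epsilon>) * real k)))))"
proof (rule exI[of _ "1 / 8"], rule conjI, simp, rule exI[of _ 0], rule conjI, simp,
    rule exI[of _ 4], intro allI impI conjI)
  fix e :: real and s k T :: nat and W :: "bool list pmf"
  assume "0 < e \<and> e < 1 \<and> set_pmf W \<subseteq> {w. length w = T} \<and> martingale_cond e T W"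
  then have e: "0 < e" "e < 1" and W: "set_pmf W \<subseteq> {w. length w = T}" "martingale_cond e T W"
    by auto
  show "settle_insec W T s k \<le> settle_insec (bern_list ((1 - e) / 2) T) T s k"
    by (rule settle_insec_le_bern[OF e W])
  assume "4 \<le> e ^ 3 * real k"
  then show "settle_insec (bern_list ((1 - e) / 2) T) T s k \<le> exp (- (1 / 8) * (e ^ 3 * (1 - 0 * e) * real k))"
    using order_trans[OF settle_insec_bern_le[OF e] decay_le_exp[OF e]] by simp
qed

end
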